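(* Let $M$ be an $n$-manifold, $f:M\times[0,T)\to\mathbb R$ smooth, and $g(t)$, $t\in[0,T)$, a solution of the modified Ricci flow $\partial_tg_{ij}=-2R_{ij}+2\nabla_i\nabla_jf$. Let $\tau\in[0,T)$ and let $\tilde\nabla_\tau$ be as in the context on $\tilde M_\tau=M\times[0,T-\tau)$, with $f$ regarded as the function $(x,t)\mapsto f(x,t+\tau)$ on $\tilde M_\tau$. Then for all $1\le i,j,k\le n$: 1) $\tilde\nabla_j(\tilde R_{ki}-\tilde\nabla_k\tilde\nabla_if)=\tilde\nabla_k(\tilde R_{ji}-\tilde\nabla_j\tilde\nabla_if)+g_{pi}\tilde R_{kj0}^p$; 2) $\tilde\nabla_0(\tilde R_{ki}-\tilde\nabla_k\tilde\nabla_if)=\tilde\nabla_k(\tilde R_{0i}-\tilde\nabla_0\tilde\nabla_if)+g_{pk}\tilde R_{i00}^p$; 3) $\tilde\nabla_j(\tilde R_{0k}-\tilde\nabla_0\tilde\nabla_kf)=\tilde\nabla_k(\tilde R_{0j}-\tilde\nabla_0\tilde\nabla_jf)$; 4) $\tilde\nabla_0(\tilde R_{0k}-\tilde\nabla_0\tilde\nabla_kf)=\tilde\nabla_k(\tilde R_{00}-\tilde\nabla_0\tilde\nabla_0f)$, where $p$ is summed over $1,\dots,n$.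
   Context: Conventions for a metric $g$ on $M$ with Christoffel symbols $\Gamma_{ij}^k$: $R_{ijk}^l=\partial_i\Gamma_{jk}^l-\partial_j\Gamma_{ik}^l+\Gamma_{jk}^m\Gamma_{im}^l-\Gamma_{ik}^m\Gamma_{jm}^l$, $R_{jk}=R_{pjk}^p$, $R=g^{jk}R_{jk}$; indices raised with $g^{-1}$. Coordinates $x^1,\dots,x^n$ on $M$, $x^0=t$. Connection $\tilde\nabla_\tau$ with Christoffel symbols (left at $(x,t)$, right from $g,f$ at $(x,t+\tau)$): $\tilde\Gamma_{ij}^k=\Gamma_{ij}^k$ ($1\le i,j,k\le n$); $\tilde\Gamma_{ij}^0=0$ ($0\le i,j\le n$); $\tilde\Gamma_{i0}^k=\tilde\Gamma_{0i}^k=-R_i^k+\nabla_i\nabla^kf$ ($1\le i,k\le n$); $\tilde\Gamma_{00}^k=\nabla^k\big(-\tfrac12R+\tfrac{\partial f}{\partial t}-\tfrac12|\nabla f|^2\big)$ ($1\le k\le n$). Curvature $\tilde R_{ijk}^l=\partial_i\tilde\Gamma_{jk}^l-\partial_j\tilde\Gamma_{ik}^l+\sum_{m=0}^n(\tilde\Gamma_{jk}^m\tilde\Gamma_{im}^l-\tilde\Gamma_{ik}^m\tilde\Gamma_{jm}^l)$ (indices in $\{0,\dots,n\}$, $\partial_0=\partial_t$); Ricci tensor $\tilde R_{jk}=\sum_{p=0}^n\tilde R_{pjk}^p$. $\tilde\nabla_a\tilde\nabla_bf=\partial_a\partial_bf-\sum_{m=0}^n\tilde\Gamma_{ab}^m\partial_mf$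 is the Hessian of $f$ with respect to $\tilde\nabla_\tau$, and $\tilde\nabla_a$ applied to a $(0,2)$-tensor is covariant differentiation with respect to $\tilde\nabla_\tau$; $g_{pi}$ is evaluated at $(x,t+\tau)$. *)

theory Defs
  imports "HOL-Analysis.Analysis"
begin

text \<open>Space-time points (x,t) in local coordinates: x in R^n (index type 'n), t real.
  Space-time indices are of type 'n option: None is the time index 0, Some i the
  spatial index i.\<close>

type_synonym 'n pt = "(real^'n) \<times> real"

definition dirv :: "'n::finite option \<Rightarrow> 'n pt" where
  "dirv a = (case a of None \<Rightarrow> (0, 1) | Some i \<Rightarrow> (axis i 1, 0))"

definition pd :: "'n::finite pt set \<Rightarrow> ('n pt \<Rightarrow> real) \<Rightarrow> 'n option \<Rightarrow> 'n pt \<Rightarrow> real" where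
  "pd D F a p = frechet_derivative F (at p within D) (dirv a)"

fun Ck :: "nat \<Rightarrow> 'n::finite pt set \<Rightarrow> ('n pt \<Rightarrow> real) \<Rightarrow> bool" where
  "Ck 0 D F = continuous_on D F"
| "Ck (Suc k) D F = ((\<forall>p\<in>D. F differentiable (at p within D)) \<and> (\<forall>a. Ck k D (pd D F a)))"

definition smooth_fun :: "'n::finite pt set \<Rightarrow> ('n pt \<Rightarrow> real) \<Rightarrow> bool" where
  "smooth_fun D F = (\<forall>k. Ck k D F)"

text \<open>Geometry of the metric g(t) on M (spatial indices only), at the point p = (x,t).
  g i j p = g_{ij}(x,t).\<close>

type_synonym 'n metric = "'n \<Rightarrow> 'n \<Rightarrow> 'n pt \<Rightarrow> real"

definition ginv :: "'n::finite metric \<Rightarrow> 'n \<Rightarrow> 'n \<Rightarrow> 'n pt \<Rightarrow> real" where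
  "ginv g k l p = matrix_inv (\<chi> a b. g a b p) $ k $ l"

definition Chr :: "'n::finite pt set \<Rightarrow> 'n metric \<Rightarrow> 'n \<Rightarrow> 'n \<Rightarrow> 'n \<Rightarrow> 'n pt \<Rightarrow> real" where
  "Chr D g i j k p = (1/2) * (\<Sum>l\<in>UNIV. ginv g k l p *
      (pd D (g j l) (Some i) p + pd D (g i l) (Some j) p - pd D (g i j) (Some l) p))"

text \<open>R_{ijk}^l = Riem D g i j k l.\<close>
definition Riem :: "'n::finite pt set \<Rightarrow> 'n metric \<Rightarrow> 'n \<Rightarrow> 'n \<Rightarrow> 'n \<Rightarrow> 'n \<Rightarrow> 'n pt \<Rightarrow> real" where
  "Riem D g i j k l p =
     pd D (Chr D g j k l) (Some i) p - pd D (Chr D g i k l) (Some j) p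
     + (\<Sum>m\<in>UNIV. Chr D g j k m p * Chr D g i m l p - Chr D g i k m p * Chr D g j m l p)"

definition Ric :: "'n::finite pt set \<Rightarrow> 'n metric \<Rightarrow> 'n \<Rightarrow> 'n \<Rightarrow> 'n pt \<Rightarrow> real" where
  "Ric D g j k p = (\<Sum>q\<in>UNIV. Riem D g q j k q p)"

definition Scal :: "'n::finite pt set \<Rightarrow> 'n metric \<Rightarrow> 'n pt \<Rightarrow> real" where
  "Scal D g p = (\<Sum>j\<in>UNIV. \<Sum>k\<in>UNIV. ginv g j k p * Ric D g j k p)"

definition RicUp :: "'n::finite pt set \<Rightarrow> 'n metric \<Rightarrow> 'n \<Rightarrow> 'n \<Rightarrow> 'n pt \<Rightarrow> real" where
  "RicUp D g i k p = (\<Sum>l\<in>UNIV. ginv g k l p * Ric D g i l p)"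

definition Hess :: "'n::finite pt set \<Rightarrow> 'n metric \<Rightarrow> ('n pt \<Rightarrow> real) \<Rightarrow> 'n \<Rightarrow> 'n \<Rightarrow> 'n pt \<Rightarrow> real" where
  "Hess D g f i j p = pd D (pd D f (Some j)) (Some i) p
      - (\<Sum>m\<in>UNIV. Chr D g i j m p * pd D f (Some m) p)"

definition HessUp :: "'n::finite pt set \<Rightarrow> 'n metric \<Rightarrow> ('n pt \<Rightarrow> real) \<Rightarrow> 'n \<Rightarrow> 'n \<Rightarrow> 'n pt \<Rightarrow> real" where
  "HessUp D g f i k p = (\<Sum>l\<in>UNIV. ginv g k l p * Hess D g f i l p)"

definition gradUp :: "'n::finite pt set \<Rightarrow> 'n metric \<Rightarrow> ('n pt \<Rightarrow> real) \<Rightarrow> 'n \<Rightarrow> 'n pt \<Rightarrow> real" where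
  "gradUp D g h k p = (\<Sum>l\<in>UNIV. ginv g k l p * pd D h (Some l) p)"

definition gradSq :: "'n::finite pt set \<Rightarrow> 'n metric \<Rightarrow> ('n pt \<Rightarrow> real) \<Rightarrow> 'n pt \<Rightarrow> real" where
  "gradSq D g f p = (\<Sum>i\<in>UNIV. \<Sum>j\<in>UNIV. ginv g i j p * pd D f (Some i) p * pd D f (Some j) p)"

definition shift :: "real \<Rightarrow> 'n pt \<Rightarrow> 'n pt" where
  "shift \<tau> p = (fst p, snd p + \<tau>)"

text \<open>Christoffel symbols of the connection tilde-nabla_tau:
  TChr D g f tau a b c p = tilde-Gamma_{ab}^c at p = (x,t), with the right-hand sides
  computed from g, f on D at (x,t+tau).\<close>
definition TChr :: "'n::finite pt set \<Rightarrow> 'n metric \<Rightarrow> ('n pt \<Rightarrow> real) \<Rightarrow> real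
     \<Rightarrow> 'n option \<Rightarrow> 'n option \<Rightarrow> 'n option \<Rightarrow> 'n pt \<Rightarrow> real" where
  "TChr D g f \<tau> a b c p =
    (case c of
       None \<Rightarrow> 0
     | Some k \<Rightarrow>
        (case (a, b) of
           (Some i, Some j) \<Rightarrow> Chr D g i j k (shift \<tau> p)
         | (Some i, None) \<Rightarrow> - RicUp D g i k (shift \<tau> p) + HessUp D g f i k (shift \<tau> p)
         | (None, Some i) \<Rightarrow> - RicUp D g i k (shift \<tau> p) + HessUp D g f i k (shift \<tau> p)
         | (None, None) \<Rightarrow>
             gradUp D g (\<lambda>q. - (1/2) * Scal D g q + pd D f None q - (1/2) * gradSq D g f q) k
               (shift \<tau> p)))"

definition TRiem :: "'n::finite pt set \<Rightarrow> 'n pt set \<Rightarrow> 'n metric \<Rightarrow> ('n pt \<Rightarrow> real) \<Rightarrow> real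
     \<Rightarrow> 'n option \<Rightarrow> 'n option \<Rightarrow> 'n option \<Rightarrow> 'n option \<Rightarrow> 'n pt \<Rightarrow> real" where
  "TRiem D D' g f \<tau> a b c d p =
     pd D' (TChr D g f \<tau> b c d) a p - pd D' (TChr D g f \<tau> a c d) b p
     + (\<Sum>m\<in>UNIV. TChr D g f \<tau> b c m p * TChr D g f \<tau> a m d p
                 - TChr D g f \<tau> a c m p * TChr D g f \<tau> b m d p)"

definition TRic :: "'n::finite pt set \<Rightarrow> 'n pt set \<Rightarrow> 'n metric \<Rightarrow> ('n pt \<Rightarrow> real) \<Rightarrow> real
     \<Rightarrow> 'n option \<Rightarrow> 'n option \<Rightarrow> 'n pt \<Rightarrow> real" where
  "TRic D D' g f \<tau> b c p = (\<Sum>q\<in>UNIV. TRiem D D' g f \<tau> q b c q p)"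

definition THess :: "'n::finite pt set \<Rightarrow> 'n pt set \<Rightarrow> 'n metric \<Rightarrow> ('n pt \<Rightarrow> real) \<Rightarrow> real
     \<Rightarrow> ('n pt \<Rightarrow> real) \<Rightarrow> 'n option \<Rightarrow> 'n option \<Rightarrow> 'n pt \<Rightarrow> real" where
  "THess D D' g f \<tau> h a b p = pd D' (pd D' h b) a p
      - (\<Sum>m\<in>UNIV. TChr D g f \<tau> a b m p * pd D' h m p)"

definition TCov2 :: "'n::finite pt set \<Rightarrow> 'n pt set \<Rightarrow> 'n metric \<Rightarrow> ('n pt \<Rightarrow> real) \<Rightarrow> real
     \<Rightarrow> ('n option \<Rightarrow> 'n option \<Rightarrow> 'n pt \<Rightarrow> real) \<Rightarrow> 'n option \<Rightarrow> 'n option \<Rightarrow> 'n option \<Rightarrow> 'n pt \<Rightarrow> real" where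
  "TCov2 D D' g f \<tau> A a b c p = pd D' (A b c) a p
      - (\<Sum>m\<in>UNIV. TChr D g f \<tau> a b m p * A m c p)
      - (\<Sum>m\<in>UNIV. TChr D g f \<tau> a c m p * A b m p)"

end

theory Submission
  imports Defs
begin

text \<open>The connection tilde-nabla is torsion free and has no time component (tilde-Gamma^0 = 0),
  and the modified Ricci flow equation says exactly that it is compatible with the degenerate
  space-time metric g_ij. So the Bianchi and Ricci identities hold and indices can be raised and
  lowered with g. Let S = tilde-Ric - tilde-Hess f and phi = -R/2 + f_t - |nabla f|^2/2. For spatial
  k, tilde-Gamma_k0^p = -g^pl S_kl by definition; the twice contracted Bianchi identity and the
  Ricci identity for nabla f turn this into S_k0 = -nabla_k phi, which makes the same formula true
  for k = 0 and then gives S_00 = -partial_t phi. Lowering tilde-R_ab0^p now yields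
  tilde-nabla_b S_ai - tilde-nabla_a S_bi (identities 1 and 2), while
  tilde-nabla_a S_0b = -Hess(phi)_ab - tilde-Gamma_a0^m S_mb is symmetric in a and b
  (identities 3 and 4). Everything is computed at time t + tau and pulled back by the shift.\<close>

section \<open>Tensor calculus over an abstract partial derivative\<close>

lemma sum_swap_inner:
  "(\<Sum>a\<in>A. \<Sum>b\<in>B. \<Sum>c\<in>C. F a b c) = (\<Sum>a\<in>A. \<Sum>c\<in>C. \<Sum>b\<in>B. (F a b c :: 'z::comm_monoid_add))"
  by (rule sum.cong[OF refl]) (rule sum.swap)

lemma sum_rotate3:
  "(\<Sum>a\<in>A. \<Sum>b\<in>B. \<Sum>c\<in>C. F a b c) = (\<Sum>b\<in>B. \<Sum>c\<in>C. \<Sum>a\<in>A. (F a b c :: 'z::comm_monoid_add))"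
  by (subst sum.swap) (rule sum.cong[OF refl], rule sum.swap)

lemma sum_rotate3':
  "(\<Sum>a\<in>A. \<Sum>b\<in>B. \<Sum>c\<in>C. F a b c) = (\<Sum>c\<in>C. \<Sum>a\<in>A. \<Sum>b\<in>B. (F a b c :: 'z::comm_monoid_add))"
  using sum_rotate3[where F="\<lambda>c a b. F a b c" and A=C and B=A and C=B] by simp

lemma sum_reverse3:
  "(\<Sum>a\<in>A. \<Sum>b\<in>B. \<Sum>c\<in>C. F a b c) = (\<Sum>c\<in>C. \<Sum>b\<in>B. \<Sum>a\<in>A. (F a b c :: 'z::comm_monoid_add))"
  by (subst sum_rotate3) (rule sum.swap)

locale diff_calculus =
  fixes X :: "'p set" and sm :: "('p \<Rightarrow> real) \<Rightarrow> bool"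
    and d :: "('p \<Rightarrow> real) \<Rightarrow> 'i::finite \<Rightarrow> 'p \<Rightarrow> real"
  assumes sm_const: "sm (\<lambda>x. c)"
  and sm_add: "sm F \<Longrightarrow> sm G \<Longrightarrow> sm (\<lambda>x. F x + G x)"
  and sm_mult: "sm F \<Longrightarrow> sm G \<Longrightarrow> sm (\<lambda>x. F x * G x)"
  and sm_d: "sm F \<Longrightarrow> sm (d F a)"
  and d_add: "sm F \<Longrightarrow> sm G \<Longrightarrow> x \<in> X \<Longrightarrow> d (\<lambda>x. F x + G x) a x = d F a x + d G a x"
  and d_mult: "sm F \<Longrightarrow> sm G \<Longrightarrow> x \<in> X \<Longrightarrow> d (\<lambda>x. F x * G x) a x = F x * d G a x + d F a x * G x"
  and d_const: "x \<in> X \<Longrightarrow> d (\<lambda>x. c) a x = 0"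
  and d_cong: "(\<And>y. y \<in> X \<Longrightarrow> F y = G y) \<Longrightarrow> x \<in> X \<Longrightarrow> d F a x = d G a x"
  and d_comm: "sm F \<Longrightarrow> x \<in> X \<Longrightarrow> d (d F a) b x = d (d F b) a x"
begin

lemma sm_uminus: "sm F \<Longrightarrow> sm (\<lambda>x. - F x)"
  using sm_mult[OF sm_const[of "-1"], of F] by simp

lemma sm_diff: "sm F \<Longrightarrow> sm G \<Longrightarrow> sm (\<lambda>x. F x - G x)"
  using sm_add[OF _ sm_uminus, of F G] by simp

lemma sm_sum: "(\<And>m. m \<in> A \<Longrightarrow> sm (F m)) \<Longrightarrow> sm (\<lambda>x. \<Sum>m\<in>A. F m x)"
  by (induction A rule: infinite_finite_induct) (simp_all add: sm_const sm_add)

lemma sm_sum_all: "(\<And>m. sm (F m)) \<Longrightarrow> sm (\<lambda>x. \<Sum>m\<in>A. F m x)"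
  by (rule sm_sum) auto

lemma d_cmult: "sm F \<Longrightarrow> x \<in> X \<Longrightarrow> d (\<lambda>x. c * F x) a x = c * d F a x"
  using d_mult[OF sm_const, of F x c a] by (simp add: d_const)

lemma d_uminus: "sm F \<Longrightarrow> x \<in> X \<Longrightarrow> d (\<lambda>x. - F x) a x = - d F a x"
  using d_cmult[of F x "-1" a] by simp

lemma d_diff: "sm F \<Longrightarrow> sm G \<Longrightarrow> x \<in> X \<Longrightarrow> d (\<lambda>x. F x - G x) a x = d F a x - d G a x"
  using d_add[OF _ sm_uminus, of F G x a] d_uminus[of G x a] by simp

lemma d_sum: "finite A \<Longrightarrow> (\<And>m. m \<in> A \<Longrightarrow> sm (F m)) \<Longrightarrow> x \<in> X \<Longrightarrow>
   d (\<lambda>x. \<Sum>m\<in>A. F m x) a x = (\<Sum>m\<in>A. d (F m) a x)"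
proof (induction A rule: finite_induct)
  case empty then show ?case by (simp add: d_const)
next
  case (insert b A)
  have "d (\<lambda>x. \<Sum>m\<in>insert b A. F m x) a x = d (\<lambda>x. F b x + (\<Sum>m\<in>A. F m x)) a x"
    using insert by simp
  also have "\<dots> = d (F b) a x + d (\<lambda>x. \<Sum>m\<in>A. F m x) a x"
    using insert by (intro d_add sm_sum) auto
  finally show ?case using insert by simp
qed

lemma d_sum_UNIV: "(\<And>m. sm (F (m::'b::finite))) \<Longrightarrow> x \<in> X \<Longrightarrow>
   d (\<lambda>x. \<Sum>m\<in>UNIV. F m x) a x = (\<Sum>m\<in>UNIV. d (F m) a x)"
  by (rule d_sum) auto

lemma d_zero: "(\<And>y. y \<in> X \<Longrightarrow> F y = 0) \<Longrightarrow> x \<in> X \<Longrightarrow> d F a x = 0"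
  using d_cong[of F "\<lambda>_. 0" x a] d_const by simp

lemma diff_calculus_reindex: "diff_calculus X sm (\<lambda>F i. d F (r i))"
proof
  show "(\<And>y. y \<in> X \<Longrightarrow> F y = G y) \<Longrightarrow> x \<in> X \<Longrightarrow> d F (r a) x = d G (r a) x" for F G x a
    by (rule d_cong)
qed (simp_all add: sm_const sm_add sm_mult sm_d d_add d_mult d_const d_comm)

lemmas sm_rules = sm_const sm_add sm_mult sm_d sm_uminus sm_diff sm_sum_all
lemmas d_rules = d_add d_mult d_const d_uminus d_diff d_sum_UNIV d_cmult

end

locale torsion_free_connection = diff_calculus X sm d
  for X :: "'p set" and sm and d :: "('p \<Rightarrow> real) \<Rightarrow> 'i::finite \<Rightarrow> 'p \<Rightarrow> real" +
  fixes \<Gamma> :: "'i \<Rightarrow> 'i \<Rightarrow> 'i \<Rightarrow> 'p \<Rightarrow> real"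
  assumes \<Gamma>_sm: "sm (\<Gamma> a b c)"
  and \<Gamma>_sym: "x \<in> X \<Longrightarrow> \<Gamma> a b c x = \<Gamma> b a c x"
begin

definition curv :: "'i \<Rightarrow> 'i \<Rightarrow> 'i \<Rightarrow> 'i \<Rightarrow> 'p \<Rightarrow> real" where
  "curv a b c e = (\<lambda>x. d (\<Gamma> b c e) a x - d (\<Gamma> a c e) b x
      + (\<Sum>m\<in>UNIV. \<Gamma> b c m x * \<Gamma> a m e x - \<Gamma> a c m x * \<Gamma> b m e x))"

lemma curv_sm[simp]: "sm (curv a b c e)"
  unfolding curv_def by (intro sm_rules \<Gamma>_sm)

lemma curv_antisym: "curv a b c e x = - curv b a c e x"
  unfolding curv_def by (simp add: sum_subtractf)

definition cov_curv :: "'i \<Rightarrow> 'i \<Rightarrow> 'i \<Rightarrow> 'i \<Rightarrow> 'i \<Rightarrow> 'p \<Rightarrow> real" where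
  "cov_curv f a b c e = (\<lambda>x. d (curv a b c e) f x - (\<Sum>m\<in>UNIV. \<Gamma> f a m x * curv m b c e x)
     - (\<Sum>m\<in>UNIV. \<Gamma> f b m x * curv a m c e x) - (\<Sum>m\<in>UNIV. \<Gamma> f c m x * curv a b m e x)
     + (\<Sum>m\<in>UNIV. \<Gamma> f m e x * curv a b c m x))"

lemma d_curv: "x \<in> X \<Longrightarrow> d (curv a b c e) f x = d (d (\<Gamma> b c e) a) f x - d (d (\<Gamma> a c e) b) f x
   + (\<Sum>m\<in>UNIV. d (\<Gamma> b c m) f x * \<Gamma> a m e x) + (\<Sum>m\<in>UNIV. \<Gamma> b c m x * d (\<Gamma> a m e) f x)
   - (\<Sum>m\<in>UNIV. d (\<Gamma> a c m) f x * \<Gamma> b m e x) - (\<Sum>m\<in>UNIV. \<Gamma> a c m x * d (\<Gamma> b m e) f x)"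
  unfolding curv_def
  by (simp add: d_rules sm_rules \<Gamma>_sm sum.distrib sum_subtractf algebra_simps)

lemma second_bianchi:
  assumes x: "x \<in> X"
  shows "cov_curv e a b c e' x + cov_curv a b e c e' x + cov_curv b e a c e' x = 0"
proof -
  have cancel: "(\<Sum>m\<in>UNIV. \<Gamma> e a m x * curv m b c e' x) + (\<Sum>m\<in>UNIV. \<Gamma> a e m x * curv b m c e' x) = 0"
    for e a b c e'
  proof -
    have "(\<Sum>m\<in>UNIV. \<Gamma> a e m x * curv b m c e' x) = (\<Sum>m\<in>UNIV. - (\<Gamma> e a m x * curv m b c e' x))"
      by (rule sum.cong) (simp_all add: \<Gamma>_sym[OF x, of a e] curv_antisym[of b])
    then show ?thesis by (simp add: sum_negf)
  qed
  have third: "(\<Sum>m\<in>UNIV. \<Gamma> e c m x * curv a b m e' x) =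
     (\<Sum>m\<in>UNIV. \<Gamma> e c m x * d (\<Gamma> b m e') a x) - (\<Sum>m\<in>UNIV. \<Gamma> e c m x * d (\<Gamma> a m e') b x)
     + (\<Sum>m\<in>UNIV. \<Sum>p\<in>UNIV. \<Gamma> e c m x * (\<Gamma> b m p x * \<Gamma> a p e' x))
     - (\<Sum>m\<in>UNIV. \<Sum>p\<in>UNIV. \<Gamma> e c m x * (\<Gamma> a m p x * \<Gamma> b p e' x))" for e c a b e'
    unfolding curv_def by (simp add: algebra_simps sum.distrib sum_subtractf sum_distrib_left)
  have fourth: "(\<Sum>m\<in>UNIV. \<Gamma> e m e' x * curv a b c m x) =
     (\<Sum>m\<in>UNIV. \<Gamma> e m e' x * d (\<Gamma> b c m) a x) - (\<Sum>m\<in>UNIV. \<Gamma> e m e' x * d (\<Gamma> a c m) b x)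
     + (\<Sum>p\<in>UNIV. \<Sum>m\<in>UNIV. \<Gamma> e m e' x * (\<Gamma> b c p x * \<Gamma> a p m x))
     - (\<Sum>p\<in>UNIV. \<Sum>m\<in>UNIV. \<Gamma> e m e' x * (\<Gamma> a c p x * \<Gamma> b p m x))" for e a b c e'
    unfolding curv_def
    by (simp add: algebra_simps sum.distrib sum_subtractf sum_distrib_left) (subst (1 2) sum.swap, simp)
  show ?thesis
    unfolding cov_curv_def
    using cancel[of e a b c e'] cancel[of a b e c e'] cancel[of b e a c e']
    by (simp add: d_curv[OF x] third fourth d_comm[OF \<Gamma>_sm x]) (simp add: algebra_simps)
qed

definition ric :: "'i \<Rightarrow> 'i \<Rightarrow> 'p \<Rightarrow> real" where
  "ric b c = (\<lambda>x. \<Sum>q\<in>UNIV. curv q b c q x)"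

definition cov1 :: "('i \<Rightarrow> 'p \<Rightarrow> real) \<Rightarrow> 'i \<Rightarrow> 'i \<Rightarrow> 'p \<Rightarrow> real" where
  "cov1 w a b = (\<lambda>x. d (w b) a x - (\<Sum>m\<in>UNIV. \<Gamma> a b m x * w m x))"

definition cov2 :: "('i \<Rightarrow> 'i \<Rightarrow> 'p \<Rightarrow> real) \<Rightarrow> 'i \<Rightarrow> 'i \<Rightarrow> 'i \<Rightarrow> 'p \<Rightarrow> real" where
  "cov2 T a b c = (\<lambda>x. d (T b c) a x - (\<Sum>m\<in>UNIV. \<Gamma> a b m x * T m c x)
      - (\<Sum>m\<in>UNIV. \<Gamma> a c m x * T b m x))"

lemma ric_sm[simp]: "sm (ric b c)"
  unfolding ric_def by (intro sm_rules) simp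

lemma cov1_sm[simp]: "(\<And>b. sm (w b)) \<Longrightarrow> sm (cov1 w a b)"
  unfolding cov1_def by (intro sm_rules \<Gamma>_sm) auto

lemma cov1_uminus:
  "(\<And>b. sm (w b)) \<Longrightarrow> x \<in> X \<Longrightarrow> cov1 (\<lambda>b y. - w b y) a c x = - cov1 w a c x"
  unfolding cov1_def by (simp add: d_uminus sum_negf)

lemma cov2_uminus:
  "(\<And>b c. sm (T b c)) \<Longrightarrow> x \<in> X \<Longrightarrow> cov2 (\<lambda>b c y. - T b c y) a b c x = - cov2 T a b c x"
  unfolding cov2_def by (simp add: d_uminus sum_negf)

lemma cov2_diff:
  "(\<And>b c. sm (T b c)) \<Longrightarrow> (\<And>b c. sm (T' b c)) \<Longrightarrow> x \<in> X \<Longrightarrow>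
   cov2 (\<lambda>b c y. T b c y - T' b c y) a b c x = cov2 T a b c x - cov2 T' a b c x"
  unfolding cov2_def by (simp add: d_diff sum_subtractf algebra_simps)

lemma cov2_sym:
  assumes T: "\<And>b c y. y \<in> X \<Longrightarrow> T b c y = T c b y" and x: "x \<in> X"
  shows "cov2 T a b c x = cov2 T a c b x"
  unfolding cov2_def using T[OF x] d_cong[OF T x] by (simp add: algebra_simps)

lemma cov2_product:
  assumes v: "\<And>b. sm (v b)" and w: "\<And>b. sm (w b)" and x: "x \<in> X"
  shows "cov2 (\<lambda>b c y. v b y * w c y) a b c x = cov1 v a b x * w c x + v b x * cov1 w a c x"
  unfolding cov2_def cov1_def using v w x
  by (simp add: d_rules algebra_simps sum_distrib_left sum_distrib_right)

lemma first_bianchi: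
  assumes x: "x \<in> X"
  shows "curv a b c e x + curv b c a e x + curv c a b e x = 0"
proof -
  have s: "\<And>a b c. d (\<Gamma> a b c) e x = d (\<Gamma> b a c) e x" for e
    by (rule d_cong[OF _ x]) (rule \<Gamma>_sym)
  show ?thesis unfolding curv_def
    by (simp add: s[of c b] s[of c a] s[of b a] \<Gamma>_sym[OF x, of c b] \<Gamma>_sym[OF x, of c a] \<Gamma>_sym[OF x, of b a]
          sum_subtractf sum.distrib algebra_simps)
qed

lemma curv_trace_24: "(\<Sum>e\<in>UNIV. curv b e c e x) = - ric b c x"
  unfolding ric_def by (subst curv_antisym) (simp add: sum_negf)

lemma contracted_bianchi:
  assumes x: "x \<in> X"
  shows "(\<Sum>e\<in>UNIV. cov_curv e a b c e x) = cov2 ric a b c x - cov2 ric b a c x"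
proof -
  have second: "(\<Sum>e\<in>UNIV. cov_curv a b e c e x) = - cov2 ric a b c x"
  proof -
    have "(\<Sum>e\<in>UNIV. d (curv b e c e) a x) = d (\<lambda>y. \<Sum>e\<in>UNIV. curv b e c e y) a x"
      using x by (simp add: d_sum_UNIV)
    also have "\<dots> = d (\<lambda>y. - ric b c y) a x"
      by (rule d_cong[OF _ x]) (simp add: curv_trace_24)
    finally have 1: "(\<Sum>e\<in>UNIV. d (curv b e c e) a x) = - d (ric b c) a x"
      using x by (simp add: d_uminus)
    have 2: "(\<Sum>e\<in>UNIV. \<Sum>m\<in>UNIV. \<Gamma> a m e x * curv b e c m x) = (\<Sum>e\<in>UNIV. \<Sum>m\<in>UNIV. \<Gamma> a e m x * curv b m c e x)"
      by (rule sum.swap)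
    have 3: "(\<Sum>e\<in>UNIV. \<Sum>m\<in>UNIV. \<Gamma> a b m x * curv m e c e x) = (\<Sum>m\<in>UNIV. \<Gamma> a b m x * - ric m c x)"
      by (subst sum.swap) (simp add: sum_distrib_left[symmetric] curv_trace_24)
    have 4: "(\<Sum>e\<in>UNIV. \<Sum>m\<in>UNIV. \<Gamma> a c m x * curv b e m e x) = (\<Sum>m\<in>UNIV. \<Gamma> a c m x * - ric b m x)"
      by (subst sum.swap) (simp add: sum_distrib_left[symmetric] curv_trace_24)
    show ?thesis
      unfolding cov_curv_def cov2_def using 1 2 3 4
      by (simp add: sum_subtractf sum.distrib sum_negf)
  qed
  have third: "(\<Sum>e\<in>UNIV. cov_curv b e a c e x) = cov2 ric b a c x"
  proof -
    have 1: "(\<Sum>e\<in>UNIV. d (curv e a c e) b x) = d (ric a c) b x"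
      using x unfolding ric_def by (simp add: d_sum_UNIV)
    have 2: "(\<Sum>e\<in>UNIV. \<Sum>m\<in>UNIV. \<Gamma> b m e x * curv e a c m x) = (\<Sum>e\<in>UNIV. \<Sum>m\<in>UNIV. \<Gamma> b e m x * curv m a c e x)"
      by (rule sum.swap)
    have 3: "(\<Sum>e\<in>UNIV. \<Sum>m\<in>UNIV. \<Gamma> b a m x * curv e m c e x) = (\<Sum>m\<in>UNIV. \<Gamma> b a m x * ric m c x)"
      unfolding ric_def by (subst sum.swap) (simp add: sum_distrib_left[symmetric])
    have 4: "(\<Sum>e\<in>UNIV. \<Sum>m\<in>UNIV. \<Gamma> b c m x * curv e a m e x) = (\<Sum>m\<in>UNIV. \<Gamma> b c m x * ric a m x)"
      unfolding ric_def by (subst sum.swap) (simp add: sum_distrib_left[symmetric])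
    show ?thesis
      unfolding cov_curv_def cov2_def using 1 2 3 4
      by (simp add: sum_subtractf sum.distrib)
  qed
  have "(\<Sum>e\<in>UNIV. cov_curv e a b c e x + cov_curv a b e c e x + cov_curv b e a c e x) = 0"
    using second_bianchi[OF x] by simp
  then show ?thesis using second third by (simp add: sum.distrib)
qed

lemma ricci_identity:
  assumes w: "\<And>b. sm (w b)" and x: "x \<in> X"
  shows "cov2 (cov1 w) a b c x - cov2 (cov1 w) b a c x = - (\<Sum>p\<in>UNIV. curv a b c p x * w p x)"
proof -
  have curv_w: "(\<Sum>p\<in>UNIV. curv a b c p x * w p x) =
     (\<Sum>p\<in>UNIV. d (\<Gamma> b c p) a x * w p x) - (\<Sum>p\<in>UNIV. d (\<Gamma> a c p) b x * w p x)
     + (\<Sum>m\<in>UNIV. \<Sum>p\<in>UNIV. \<Gamma> b c m x * (\<Gamma> a m p x * w p x))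
     - (\<Sum>m\<in>UNIV. \<Sum>p\<in>UNIV. \<Gamma> a c m x * (\<Gamma> b m p x * w p x))"
    unfolding curv_def
    by (simp add: algebra_simps sum.distrib sum_subtractf sum_distrib_left sum_distrib_right)
      (subst (1 2) sum.swap, simp add: algebra_simps)
  show ?thesis
    unfolding cov2_def cov1_def curv_w using x w
    by (simp add: d_rules sm_rules \<Gamma>_sm \<Gamma>_sym[OF x, of b a] d_comm[OF w x] sum_subtractf sum.distrib
        sum_distrib_left algebra_simps)
qed

definition hess :: "('p \<Rightarrow> real) \<Rightarrow> 'i \<Rightarrow> 'i \<Rightarrow> 'p \<Rightarrow> real" where
  "hess F = cov1 (\<lambda>m. d F m)"

lemma hess_sym: "sm F \<Longrightarrow> x \<in> X \<Longrightarrow> hess F a b x = hess F b a x"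
  unfolding hess_def cov1_def by (simp add: d_comm \<Gamma>_sym[of x b a])

lemma hess_sm[simp]: "sm F \<Longrightarrow> sm (hess F a b)"
  unfolding hess_def by (intro cov1_sm sm_d)

definition div_mixed :: "('i \<Rightarrow> 'i \<Rightarrow> 'p \<Rightarrow> real) \<Rightarrow> 'i \<Rightarrow> 'p \<Rightarrow> real" where
  "div_mixed Y a = (\<lambda>x. \<Sum>e\<in>UNIV. d (Y a e) e x - (\<Sum>m\<in>UNIV. \<Gamma> e a m x * Y m e x)
                + (\<Sum>m\<in>UNIV. \<Gamma> e m e x * Y a m x))"

lemma div_mixed_cong: "(\<And>a e y. y \<in> X \<Longrightarrow> Y a e y = Y' a e y) \<Longrightarrow> x \<in> X \<Longrightarrow> div_mixed Y a x = div_mixed Y' a x"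
  unfolding div_mixed_def by (simp add: d_cong[of "Y _ _" "Y' _ _"])

definition cov_mixed :: "('i \<Rightarrow> 'i \<Rightarrow> 'p \<Rightarrow> real) \<Rightarrow> 'i \<Rightarrow> 'i \<Rightarrow> 'i \<Rightarrow> 'p \<Rightarrow> real" where
  "cov_mixed Y e a f = (\<lambda>x. d (Y a f) e x - (\<Sum>m\<in>UNIV. \<Gamma> e a m x * Y m f x) + (\<Sum>m\<in>UNIV. \<Gamma> e m f x * Y a m x))"

lemma div_mixed_eq_sum: "div_mixed Y a x = (\<Sum>e\<in>UNIV. cov_mixed Y e a e x)"
  unfolding div_mixed_def cov_mixed_def ..

lemma ric_as_divergence:
  assumes x: "x \<in> X"
  shows "ric k c x = div_mixed (\<lambda>a p. \<Gamma> a c p) k x - d (\<lambda>y. \<Sum>q\<in>UNIV. \<Gamma> q c q y) k x"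
proof -
  have 1: "(\<Sum>e\<in>UNIV. \<Sum>m\<in>UNIV. \<Gamma> e c m x * \<Gamma> k m e x) = (\<Sum>e\<in>UNIV. \<Sum>m\<in>UNIV. \<Gamma> e k m x * \<Gamma> m c e x)"
    apply (subst sum.swap) by (simp add: \<Gamma>_sym[OF x, of k] mult.commute)
  show ?thesis unfolding ric_def curv_def div_mixed_def using x 1
    by (simp add: d_sum_UNIV \<Gamma>_sm sum_subtractf sum.distrib algebra_simps)
qed

end

section \<open>Connections compatible with a degenerate metric\<close>

text \<open>On space-time the metric is degenerate: gl and its inverse gu only live on the spatial
  indices sp, and the connection has no non-spatial component.\<close>

locale spatial_metric_connection = torsion_free_connection X sm d \<Gamma>
  for X :: "'p set" and sm and d :: "('p \<Rightarrow> real) \<Rightarrow> 'i::finite \<Rightarrow> 'p \<Rightarrow> real" and \<Gamma> +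
  fixes sp :: "'i set" and gu gl :: "'i \<Rightarrow> 'i \<Rightarrow> 'p \<Rightarrow> real"
  assumes gu_sm: "sm (gu a b)" and gl_sm: "sm (gl a b)"
    and gu_sym: "x \<in> X \<Longrightarrow> gu a b x = gu b a x"
    and gl_sym: "x \<in> X \<Longrightarrow> gl a b x = gl b a x"
    and gu_nonspatial: "a \<notin> sp \<or> b \<notin> sp \<Longrightarrow> gu a b x = 0"
    and gl_nonspatial: "a \<notin> sp \<or> b \<notin> sp \<Longrightarrow> gl a b x = 0"
    and \<Gamma>_nonspatial: "c \<notin> sp \<Longrightarrow> \<Gamma> a b c x = 0"
    and gu_gl: "x \<in> X \<Longrightarrow> (\<Sum>m\<in>UNIV. gu a m x * gl m b x) = (if a = b \<and> a \<in> sp then 1 else 0)"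
    and gl_compat: "b \<in> sp \<Longrightarrow> c \<in> sp \<Longrightarrow> x \<in> X \<Longrightarrow>
      d (gl b c) a x = (\<Sum>m\<in>UNIV. \<Gamma> a b m x * gl m c x) + (\<Sum>m\<in>UNIV. \<Gamma> a c m x * gl b m x)"
begin

lemma gl_gu:
  assumes x: "x \<in> X"
  shows "(\<Sum>m\<in>UNIV. gl a m x * gu m b x) = (if a = b \<and> a \<in> sp then 1 else 0)"
proof -
  have "(\<Sum>m\<in>UNIV. gl a m x * gu m b x) = (\<Sum>m\<in>UNIV. gu b m x * gl m a x)"
    by (rule sum.cong) (auto simp: gu_sym[OF x, of m b for m] gl_sym[OF x, of a] mult.commute)
  then show ?thesis using gu_gl[OF x, of b a] by auto
qed

lemma curv_nonspatial: "e \<notin> sp \<Longrightarrow> x \<in> X \<Longrightarrow> curv a b c e x = 0"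
  unfolding curv_def by (simp add: d_zero \<Gamma>_nonspatial)

lemma d_gu_nonspatial: "c \<notin> sp \<Longrightarrow> x \<in> X \<Longrightarrow> d (gu a c) e x = 0"
  by (rule d_zero) (simp_all add: gu_nonspatial)

lemma sum_spatial_delta: "(\<Sum>m\<in>UNIV. (F m :: real) * (if m = c \<and> m \<in> sp then 1 else 0)) = (if c \<in> sp then F c else 0)"
proof -
  have "\<And>m. F m * (if m = c \<and> m \<in> sp then 1 else 0) = (if m = c then (if c \<in> sp then F c else 0) else 0)"
    by auto
  then show ?thesis by simp
qed

lemma sum_spatial_delta': "(\<Sum>m\<in>UNIV. (F m :: real) * (if c = m \<and> c \<in> sp then 1 else 0)) = (if c \<in> sp then F c else 0)"
proof -
  have "\<And>m. F m * (if c = m \<and> c \<in> sp then 1 else 0) = (if m = c then (if c \<in> sp then F c else 0) else 0)"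
    by auto
  then show ?thesis by simp
qed

lemma d_gu:
  assumes x: "x \<in> X"
  shows "d (gu a c) e x = - (\<Sum>p\<in>UNIV. \<Sum>q\<in>UNIV. gu a p x * d (gl p q) e x * gu q c x)"
proof -
  have 0: "(\<Sum>m\<in>UNIV. gu a m x * d (gl m b) e x + d (gu a m) e x * gl m b x) = 0" for b
  proof -
    have "(\<Sum>m\<in>UNIV. gu a m x * d (gl m b) e x + d (gu a m) e x * gl m b x)
        = d (\<lambda>y. \<Sum>m\<in>UNIV. gu a m y * gl m b y) e x"
      using x by (simp add: d_rules sm_rules gu_sm gl_sm)
    also have "\<dots> = d (\<lambda>y. if a = b \<and> a \<in> sp then 1 else 0) e x"
      by (rule d_cong[OF _ x]) (simp add: gu_gl)
    also have "\<dots> = 0" using x by (simp add: d_const)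
    finally show ?thesis .
  qed
  have "(\<Sum>b\<in>UNIV. (\<Sum>m\<in>UNIV. gu a m x * d (gl m b) e x + d (gu a m) e x * gl m b x) * gu b c x) = 0"
    by (simp add: 0)
  also have "(\<Sum>b\<in>UNIV. (\<Sum>m\<in>UNIV. gu a m x * d (gl m b) e x + d (gu a m) e x * gl m b x) * gu b c x)
     = (\<Sum>b\<in>UNIV. \<Sum>m\<in>UNIV. gu a m x * d (gl m b) e x * gu b c x)
       + (\<Sum>b\<in>UNIV. \<Sum>m\<in>UNIV. d (gu a m) e x * (gl m b x * gu b c x))"
    by (simp add: sum_distrib_right sum_distrib_left sum.distrib[symmetric] algebra_simps)
  also have "(\<Sum>b\<in>UNIV. \<Sum>m\<in>UNIV. d (gu a m) e x * (gl m b x * gu b c x))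
     = (\<Sum>m\<in>UNIV. d (gu a m) e x * (\<Sum>b\<in>UNIV. gl m b x * gu b c x))"
    by (subst sum.swap) (simp add: sum_distrib_left)
  finally have 1: "(\<Sum>b\<in>UNIV. \<Sum>m\<in>UNIV. gu a m x * d (gl m b) e x * gu b c x)
      + (\<Sum>m\<in>UNIV. d (gu a m) e x * (\<Sum>b\<in>UNIV. gl m b x * gu b c x)) = 0" .
  have 2: "(\<Sum>m\<in>UNIV. d (gu a m) e x * (\<Sum>b\<in>UNIV. gl m b x * gu b c x)) = d (gu a c) e x"
    using x by (simp add: gl_gu sum_spatial_delta d_gu_nonspatial)
  have 3: "(\<Sum>b\<in>UNIV. \<Sum>m\<in>UNIV. gu a m x * d (gl m b) e x * gu b c x)
     = (\<Sum>p\<in>UNIV. \<Sum>q\<in>UNIV. gu a p x * d (gl p q) e x * gu q c x)"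
    by (rule sum.swap)
  show ?thesis using 1 2 3 by linarith
qed

lemma gu_compat:
  assumes x: "x \<in> X"
  shows "d (gu b c) e x = - (\<Sum>m\<in>UNIV. \<Gamma> e m b x * gu m c x) - (\<Sum>m\<in>UNIV. \<Gamma> e m c x * gu b m x)"
proof -
  have 1: "gu b p x * d (gl p q) e x * gu q c x =
      gu b p x * ((\<Sum>m\<in>UNIV. \<Gamma> e p m x * gl m q x) + (\<Sum>m\<in>UNIV. \<Gamma> e q m x * gl p m x)) * gu q c x" for p q
  proof (cases "p \<in> sp \<and> q \<in> sp")
    case True then show ?thesis using x by (simp add: gl_compat)
  next
    case False then show ?thesis by (auto simp: gu_nonspatial)
  qed
  have 2: "(\<Sum>p\<in>UNIV. \<Sum>q\<in>UNIV. gu b p x * (\<Sum>m\<in>UNIV. \<Gamma> e p m x * gl m q x) * gu q c x)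
      = (\<Sum>p\<in>UNIV. gu b p x * (\<Sum>m\<in>UNIV. \<Gamma> e p m x * (\<Sum>q\<in>UNIV. gl m q x * gu q c x)))"
    by (simp add: sum_distrib_left sum_distrib_right algebra_simps) (subst (2) sum.swap, simp)
  have 3: "(\<Sum>p\<in>UNIV. \<Sum>q\<in>UNIV. gu b p x * (\<Sum>m\<in>UNIV. \<Gamma> e q m x * gl p m x) * gu q c x)
      = (\<Sum>q\<in>UNIV. gu q c x * (\<Sum>m\<in>UNIV. \<Gamma> e q m x * (\<Sum>p\<in>UNIV. gu b p x * gl p m x)))"
    by (subst sum.swap, simp add: sum_distrib_left sum_distrib_right algebra_simps, subst (2) sum.swap, simp)
  have 4: "(\<Sum>m\<in>UNIV. \<Gamma> e p m x * (\<Sum>q\<in>UNIV. gl m q x * gu q c x)) = \<Gamma> e p c x" for p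
    using x by (simp add: gl_gu sum_spatial_delta \<Gamma>_nonspatial)
  have 5: "(\<Sum>m\<in>UNIV. \<Gamma> e q m x * (\<Sum>p\<in>UNIV. gu b p x * gl p m x)) = \<Gamma> e q b x" for q
    using x by (simp add: gu_gl sum_spatial_delta' \<Gamma>_nonspatial)
  have "d (gu b c) e x = - (\<Sum>p\<in>UNIV. \<Sum>q\<in>UNIV. gu b p x * ((\<Sum>m\<in>UNIV. \<Gamma> e p m x * gl m q x) + (\<Sum>m\<in>UNIV. \<Gamma> e q m x * gl p m x)) * gu q c x)"
    by (simp only: d_gu[OF x] 1)
  also have "\<dots> = - (\<Sum>p\<in>UNIV. \<Sum>q\<in>UNIV. gu b p x * (\<Sum>m\<in>UNIV. \<Gamma> e p m x * gl m q x) * gu q c x)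
     - (\<Sum>p\<in>UNIV. \<Sum>q\<in>UNIV. gu b p x * (\<Sum>m\<in>UNIV. \<Gamma> e q m x * gl p m x) * gu q c x)"
    by (simp add: distrib_left distrib_right sum.distrib)
  also have "\<dots> = - (\<Sum>p\<in>UNIV. gu b p x * \<Gamma> e p c x) - (\<Sum>q\<in>UNIV. gu q c x * \<Gamma> e q b x)"
    unfolding 2 3 4 5 ..
  finally show ?thesis by (simp add: mult.commute)
qed

lemma dd_gu:
  assumes x: "x \<in> X"
  shows "d (d (gu c e) b) a x =
     - (\<Sum>m\<in>UNIV. d (\<Gamma> b m c) a x * gu m e x) - (\<Sum>m\<in>UNIV. d (\<Gamma> b m e) a x * gu c m x)
     + (\<Sum>n\<in>UNIV. \<Sum>m\<in>UNIV. \<Gamma> b m c x * \<Gamma> a n m x * gu n e x)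
     + (\<Sum>m\<in>UNIV. \<Sum>n\<in>UNIV. \<Gamma> b m c x * \<Gamma> a n e x * gu m n x)
     + (\<Sum>n\<in>UNIV. \<Sum>m\<in>UNIV. \<Gamma> b m e x * \<Gamma> a n c x * gu n m x)
     + (\<Sum>n\<in>UNIV. \<Sum>m\<in>UNIV. \<Gamma> b m e x * \<Gamma> a n m x * gu c n x)"
proof -
  have "d (d (gu c e) b) a x = d (\<lambda>y. - (\<Sum>m\<in>UNIV. \<Gamma> b m c y * gu m e y) - (\<Sum>m\<in>UNIV. \<Gamma> b m e y * gu c m y)) a x"
    by (rule d_cong[OF _ x]) (simp add: gu_compat)
  also have "\<dots> = - (\<Sum>m\<in>UNIV. \<Gamma> b m c x * d (gu m e) a x + d (\<Gamma> b m c) a x * gu m e x)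
       - (\<Sum>m\<in>UNIV. \<Gamma> b m e x * d (gu c m) a x + d (\<Gamma> b m e) a x * gu c m x)"
    using x by (simp add: d_rules sm_rules \<Gamma>_sm gu_sm)
  also have "\<dots> = - (\<Sum>m\<in>UNIV. \<Gamma> b m c x * (- (\<Sum>n\<in>UNIV. \<Gamma> a n m x * gu n e x) - (\<Sum>n\<in>UNIV. \<Gamma> a n e x * gu m n x))
          + d (\<Gamma> b m c) a x * gu m e x)
       - (\<Sum>m\<in>UNIV. \<Gamma> b m e x * (- (\<Sum>n\<in>UNIV. \<Gamma> a n c x * gu n m x) - (\<Sum>n\<in>UNIV. \<Gamma> a n m x * gu c n x))
          + d (\<Gamma> b m e) a x * gu c m x)"
    using x by (simp add: gu_compat)
  also have "\<dots> = - (\<Sum>m\<in>UNIV. d (\<Gamma> b m c) a x * gu m e x) - (\<Sum>m\<in>UNIV. d (\<Gamma> b m e) a x * gu c m x)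
     + (\<Sum>m\<in>UNIV. \<Sum>n\<in>UNIV. \<Gamma> b m c x * \<Gamma> a n m x * gu n e x)
     + (\<Sum>m\<in>UNIV. \<Sum>n\<in>UNIV. \<Gamma> b m c x * \<Gamma> a n e x * gu m n x)
     + (\<Sum>m\<in>UNIV. \<Sum>n\<in>UNIV. \<Gamma> b m e x * \<Gamma> a n c x * gu n m x)
     + (\<Sum>m\<in>UNIV. \<Sum>n\<in>UNIV. \<Gamma> b m e x * \<Gamma> a n m x * gu c n x)"
    by (simp add: sum.distrib sum_subtractf sum_distrib_left algebra_simps sum_negf)
  also have "\<dots> = - (\<Sum>m\<in>UNIV. d (\<Gamma> b m c) a x * gu m e x) - (\<Sum>m\<in>UNIV. d (\<Gamma> b m e) a x * gu c m x)
     + (\<Sum>n\<in>UNIV. \<Sum>m\<in>UNIV. \<Gamma> b m c x * \<Gamma> a n m x * gu n e x)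
     + (\<Sum>m\<in>UNIV. \<Sum>n\<in>UNIV. \<Gamma> b m c x * \<Gamma> a n e x * gu m n x)
     + (\<Sum>n\<in>UNIV. \<Sum>m\<in>UNIV. \<Gamma> b m e x * \<Gamma> a n c x * gu n m x)
     + (\<Sum>n\<in>UNIV. \<Sum>m\<in>UNIV. \<Gamma> b m e x * \<Gamma> a n m x * gu c n x)"
    by (simp only: sum.swap[of "\<lambda>m n. \<Gamma> b m c x * \<Gamma> a n m x * gu n e x" UNIV UNIV]
        sum.swap[of "\<lambda>m n. \<Gamma> b m e x * \<Gamma> a n c x * gu n m x" UNIV UNIV]
        sum.swap[of "\<lambda>m n. \<Gamma> b m e x * \<Gamma> a n m x * gu c n x" UNIV UNIV])
  finally show ?thesis .
qed

lemma curv_gu_antisym: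
  assumes x: "x \<in> X"
  shows "(\<Sum>m\<in>UNIV. curv a b m c x * gu m e x) + (\<Sum>m\<in>UNIV. curv a b m e x * gu c m x) = 0"
proof -
  have curv_H: "(\<Sum>m\<in>UNIV. curv a b m c x * H m) =
     (\<Sum>m\<in>UNIV. d (\<Gamma> b m c) a x * H m) - (\<Sum>m\<in>UNIV. d (\<Gamma> a m c) b x * H m)
     + (\<Sum>m\<in>UNIV. \<Sum>p\<in>UNIV. \<Gamma> b m p x * \<Gamma> a p c x * H m)
     - (\<Sum>m\<in>UNIV. \<Sum>p\<in>UNIV. \<Gamma> a m p x * \<Gamma> b p c x * H m)" for c H
    unfolding curv_def
    by (simp add: algebra_simps sum.distrib sum_subtractf sum_distrib_left sum_distrib_right)
  have "d (d (gu c e) b) a x = d (d (gu c e) a) b x" by (rule d_comm[OF gu_sm x])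
  then show ?thesis
    unfolding dd_gu[OF x, of c e b a] dd_gu[OF x, of c e a b] curv_H
    by (simp add: algebra_simps)
qed

lemma curv_trace_free:
  assumes x: "x \<in> X"
  shows "(\<Sum>c\<in>UNIV. curv a b c c x) = 0"
proof -
  define T where "T e m = (\<Sum>c\<in>UNIV. curv a b c e x * gu c m x)" for e m
  have anti: "T e m = - T m e" for e m
  proof -
    have "(\<Sum>c\<in>UNIV. curv a b c e x * gu c m x) + (\<Sum>c\<in>UNIV. curv a b c m x * gu e c x) = 0"
      by (rule curv_gu_antisym[OF x])
    moreover have "(\<Sum>c\<in>UNIV. curv a b c m x * gu e c x) = T m e"
      unfolding T_def by (rule sum.cong) (simp_all add: gu_sym[OF x, of e])
    ultimately show ?thesis unfolding T_def by linarith
  qed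
  have "(\<Sum>c\<in>UNIV. curv a b c c x) = (\<Sum>c\<in>UNIV. \<Sum>e\<in>UNIV. curv a b c e x * (if c = e \<and> c \<in> sp then 1 else 0))"
    using x by (simp add: sum_spatial_delta', intro sum.cong) (auto simp: curv_nonspatial)
  also have "\<dots> = (\<Sum>c\<in>UNIV. \<Sum>e\<in>UNIV. curv a b c e x * (\<Sum>m\<in>UNIV. gu c m x * gl m e x))"
    using x by (simp add: gu_gl)
  also have "\<dots> = (\<Sum>c\<in>UNIV. \<Sum>e\<in>UNIV. \<Sum>m\<in>UNIV. curv a b c e x * gu c m x * gl m e x)"
    by (simp add: sum_distrib_left mult.assoc)
  also have "\<dots> = (\<Sum>e\<in>UNIV. \<Sum>m\<in>UNIV. \<Sum>c\<in>UNIV. curv a b c e x * gu c m x * gl m e x)"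
    by (rule sum_rotate3)
  also have "\<dots> = (\<Sum>e\<in>UNIV. \<Sum>m\<in>UNIV. T e m * gl m e x)"
    unfolding T_def by (simp add: sum_distrib_right)
  finally have 1: "(\<Sum>c\<in>UNIV. curv a b c c x) = (\<Sum>e\<in>UNIV. \<Sum>m\<in>UNIV. T e m * gl m e x)" .
  have "(\<Sum>e\<in>UNIV. \<Sum>m\<in>UNIV. T e m * gl m e x) = (\<Sum>e\<in>UNIV. \<Sum>m\<in>UNIV. - (T m e * gl e m x))"
    by (intro sum.cong refl, subst anti) (simp add: gl_sym[OF x])
  also have "\<dots> = - (\<Sum>m\<in>UNIV. \<Sum>e\<in>UNIV. T m e * gl e m x)"
    by (subst sum.swap) (simp add: sum_negf)
  finally have "(\<Sum>e\<in>UNIV. \<Sum>m\<in>UNIV. T e m * gl m e x) = 0" by simp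
  with 1 show ?thesis by simp
qed

lemma ric_sym:
  assumes x: "x \<in> X"
  shows "ric b c x = ric c b x"
proof -
  have "(\<Sum>q\<in>UNIV. curv q b c q x + curv b c q q x + curv c q b q x) = 0"
    using first_bianchi[OF x] by simp
  then have "ric b c x + (\<Sum>q\<in>UNIV. curv b c q q x) + (\<Sum>q\<in>UNIV. curv c q b q x) = 0"
    unfolding ric_def by (simp add: sum.distrib)
  then show ?thesis using curv_trace_free[OF x] curv_trace_24[of c b x] by simp
qed

lemma d_contract_gu:
  assumes x: "x \<in> X" and T: "\<And>b c. sm (T b c)"
  shows "d (\<lambda>y. \<Sum>b\<in>UNIV. \<Sum>c\<in>UNIV. gu b c y * T b c y) a x = (\<Sum>b\<in>UNIV. \<Sum>c\<in>UNIV. gu b c x * cov2 T a b c x)"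
proof -
  have "d (\<lambda>y. \<Sum>b\<in>UNIV. \<Sum>c\<in>UNIV. gu b c y * T b c y) a x
      = (\<Sum>b\<in>UNIV. \<Sum>c\<in>UNIV. gu b c x * d (T b c) a x + d (gu b c) a x * T b c x)"
    using x T by (simp add: d_rules sm_rules gu_sm)
  also have "\<dots> = (\<Sum>b\<in>UNIV. \<Sum>c\<in>UNIV. gu b c x * d (T b c) a x)
      - (\<Sum>b\<in>UNIV. \<Sum>c\<in>UNIV. \<Sum>m\<in>UNIV. \<Gamma> a m b x * gu m c x * T b c x)
      - (\<Sum>b\<in>UNIV. \<Sum>c\<in>UNIV. \<Sum>m\<in>UNIV. \<Gamma> a m c x * gu b m x * T b c x)"
    using x
    by (simp add: gu_compat sum.distrib sum_subtractf sum_distrib_right sum_distrib_left algebra_simps)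
  also have "(\<Sum>b\<in>UNIV. \<Sum>c\<in>UNIV. \<Sum>m\<in>UNIV. \<Gamma> a m b x * gu m c x * T b c x)
      = (\<Sum>m\<in>UNIV. \<Sum>c\<in>UNIV. \<Sum>b\<in>UNIV. \<Gamma> a m b x * gu m c x * T b c x)"
    by (rule sum_reverse3)
  also have "(\<Sum>b\<in>UNIV. \<Sum>c\<in>UNIV. \<Sum>m\<in>UNIV. \<Gamma> a m c x * gu b m x * T b c x)
      = (\<Sum>b\<in>UNIV. \<Sum>m\<in>UNIV. \<Sum>c\<in>UNIV. \<Gamma> a m c x * gu b m x * T b c x)"
    by (rule sum_swap_inner)
  finally show ?thesis unfolding cov2_def
    by (simp add: sum_subtractf sum_distrib_left sum.distrib algebra_simps)
qed

lemma d_contract_gu_product: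
  assumes x: "x \<in> X" and v: "\<And>b. sm (v b)" and w: "\<And>b. sm (w b)"
  shows "d (\<lambda>y. \<Sum>b\<in>UNIV. \<Sum>c\<in>UNIV. gu b c y * (v b y * w c y)) a x
     = (\<Sum>b\<in>UNIV. \<Sum>c\<in>UNIV. gu b c x * (cov1 v a b x * w c x + v b x * cov1 w a c x))"
  using d_contract_gu[OF x, of "\<lambda>b c y. v b y * w c y"] v w x
  by (simp add: cov2_product sm_mult)

lemma div_mixed_raise:
  assumes x: "x \<in> X" and T: "\<And>b c. sm (T b c)"
  shows "div_mixed (\<lambda>a e y. \<Sum>c\<in>UNIV. gu e c y * T a c y) a x = (\<Sum>e\<in>UNIV. \<Sum>c\<in>UNIV. gu e c x * cov2 T e a c x)"
proof -
  have de: "d (\<lambda>y. \<Sum>c\<in>UNIV. gu e c y * T a c y) e x =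
     (\<Sum>c\<in>UNIV. gu e c x * d (T a c) e x) - (\<Sum>c\<in>UNIV. \<Sum>m\<in>UNIV. \<Gamma> e m e x * gu m c x * T a c x)
     - (\<Sum>c\<in>UNIV. \<Sum>m\<in>UNIV. \<Gamma> e m c x * gu e m x * T a c x)" for e
    using x T
    by (simp add: gu_compat d_rules sm_rules gu_sm sum.distrib sum_subtractf sum_distrib_right sum_distrib_left algebra_simps)
  have 1: "(\<Sum>c\<in>UNIV. \<Sum>m\<in>UNIV. \<Gamma> e m e x * gu m c x * T a c x) = (\<Sum>m\<in>UNIV. \<Gamma> e m e x * (\<Sum>c\<in>UNIV. gu m c x * T a c x))" for e
    by (subst sum.swap) (simp add: sum_distrib_left mult.assoc)
  have 2: "(\<Sum>c\<in>UNIV. \<Sum>m\<in>UNIV. \<Gamma> e m c x * gu e m x * T a c x) = (\<Sum>c\<in>UNIV. gu e c x * (\<Sum>m\<in>UNIV. \<Gamma> e c m x * T a m x))" for e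
    by (subst sum.swap) (simp add: sum_distrib_left algebra_simps)
  have 3: "(\<Sum>m\<in>UNIV. \<Gamma> e a m x * (\<Sum>c\<in>UNIV. gu e c x * T m c x)) = (\<Sum>c\<in>UNIV. gu e c x * (\<Sum>m\<in>UNIV. \<Gamma> e a m x * T m c x))" for e
    by (simp add: sum_distrib_left algebra_simps) (rule sum.swap)
  show ?thesis unfolding div_mixed_def cov2_def de 1 2 3
    by (simp add: sum_subtractf algebra_simps sum.distrib)
qed

lemma div_mixed_cong_spatial:
  assumes row: "\<And>e y. y \<in> X \<Longrightarrow> Y a e y = Y' a e y"
    and spatial: "\<And>m e. m \<in> sp \<Longrightarrow> Y m e x = Y' m e x" and x: "x \<in> X"
  shows "div_mixed Y a x = div_mixed Y' a x"
proof -
  have "(\<Sum>m\<in>UNIV. \<Gamma> e a m x * Y m e x) = (\<Sum>m\<in>UNIV. \<Gamma> e a m x * Y' m e x)" for e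
    by (intro sum.cong refl) (metis spatial \<Gamma>_nonspatial mult_zero_left)
  then show ?thesis unfolding div_mixed_def by (simp add: row[OF x] d_cong[OF row x])
qed

definition curv_contr :: "'i \<Rightarrow> 'i \<Rightarrow> 'p \<Rightarrow> real" where
  "curv_contr a f = (\<lambda>y. \<Sum>b\<in>UNIV. \<Sum>c\<in>UNIV. gu b c y * curv a b c f y)"

lemma curv_contr_eq:
  assumes x: "x \<in> X"
  shows "curv_contr a f x = (\<Sum>c\<in>UNIV. gu f c x * ric a c x)"
proof -
  have 1: "(\<Sum>c\<in>UNIV. gu b c x * curv a b c f x) = - (\<Sum>m\<in>UNIV. curv a b m b x * gu f m x)" for b
  proof -
    have "(\<Sum>m\<in>UNIV. curv a b m f x * gu m b x) + (\<Sum>m\<in>UNIV. curv a b m b x * gu f m x) = 0"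
      by (rule curv_gu_antisym[OF x])
    moreover have "(\<Sum>c\<in>UNIV. gu b c x * curv a b c f x) = (\<Sum>m\<in>UNIV. curv a b m f x * gu m b x)"
      by (rule sum.cong) (simp_all add: gu_sym[OF x, of b] mult.commute)
    ultimately show ?thesis by linarith
  qed
  have "curv_contr a f x = - (\<Sum>b\<in>UNIV. \<Sum>m\<in>UNIV. curv a b m b x * gu f m x)"
    unfolding curv_contr_def 1 by (simp add: sum_negf)
  also have "\<dots> = - (\<Sum>m\<in>UNIV. gu f m x * (\<Sum>b\<in>UNIV. curv a b m b x))"
    by (subst sum.swap) (simp add: sum_distrib_left mult.commute)
  also have "\<dots> = (\<Sum>m\<in>UNIV. gu f m x * ric a m x)"
    by (simp add: curv_trace_24 sum_negf)
  finally show ?thesis .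
qed

lemma contract_cov_curv:
  assumes x: "x \<in> X"
  shows "(\<Sum>b\<in>UNIV. \<Sum>c\<in>UNIV. gu b c x * cov_curv e a b c f x) = cov_mixed curv_contr e a f x"
proof -
  have L: "(\<Sum>b\<in>UNIV. \<Sum>c\<in>UNIV. gu b c x * cov_curv e a b c f x) =
     (\<Sum>b\<in>UNIV. \<Sum>c\<in>UNIV. gu b c x * d (curv a b c f) e x)
     - (\<Sum>b\<in>UNIV. \<Sum>c\<in>UNIV. \<Sum>m\<in>UNIV. gu b c x * \<Gamma> e a m x * curv m b c f x)
     - (\<Sum>b\<in>UNIV. \<Sum>c\<in>UNIV. \<Sum>m\<in>UNIV. gu b c x * \<Gamma> e b m x * curv a m c f x)
     - (\<Sum>b\<in>UNIV. \<Sum>c\<in>UNIV. \<Sum>m\<in>UNIV. gu b c x * \<Gamma> e c m x * curv a b m f x)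
     + (\<Sum>b\<in>UNIV. \<Sum>c\<in>UNIV. \<Sum>m\<in>UNIV. gu b c x * \<Gamma> e m f x * curv a b c m x)"
    unfolding cov_curv_def by (simp add: sum_subtractf sum.distrib sum_distrib_left algebra_simps)
  have R: "cov_mixed curv_contr e a f x =
     (\<Sum>b\<in>UNIV. \<Sum>c\<in>UNIV. gu b c x * d (curv a b c f) e x)
     - (\<Sum>b\<in>UNIV. \<Sum>c\<in>UNIV. \<Sum>m\<in>UNIV. \<Gamma> e m b x * gu m c x * curv a b c f x)
     - (\<Sum>b\<in>UNIV. \<Sum>c\<in>UNIV. \<Sum>m\<in>UNIV. \<Gamma> e m c x * gu b m x * curv a b c f x)
     - (\<Sum>m\<in>UNIV. \<Sum>b\<in>UNIV. \<Sum>c\<in>UNIV. \<Gamma> e a m x * gu b c x * curv m b c f x)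
     + (\<Sum>m\<in>UNIV. \<Sum>b\<in>UNIV. \<Sum>c\<in>UNIV. \<Gamma> e m f x * gu b c x * curv a b c m x)"
    unfolding cov_mixed_def curv_contr_def using x
    by (simp add: d_rules sm_rules gu_sm gu_compat sum_subtractf sum.distrib sum_distrib_left sum_distrib_right algebra_simps)
  have e1: "(\<Sum>b\<in>UNIV. \<Sum>c\<in>UNIV. \<Sum>m\<in>UNIV. gu b c x * \<Gamma> e a m x * curv m b c f x)
      = (\<Sum>m\<in>UNIV. \<Sum>b\<in>UNIV. \<Sum>c\<in>UNIV. \<Gamma> e a m x * gu b c x * curv m b c f x)"
    by (subst sum_rotate3') (simp add: mult_ac)
  have e2: "(\<Sum>b\<in>UNIV. \<Sum>c\<in>UNIV. \<Sum>m\<in>UNIV. gu b c x * \<Gamma> e m f x * curv a b c m x)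
      = (\<Sum>m\<in>UNIV. \<Sum>b\<in>UNIV. \<Sum>c\<in>UNIV. \<Gamma> e m f x * gu b c x * curv a b c m x)"
    by (subst sum_rotate3') (simp add: mult_ac)
  have e3: "(\<Sum>b\<in>UNIV. \<Sum>c\<in>UNIV. \<Sum>m\<in>UNIV. gu b c x * \<Gamma> e b m x * curv a m c f x)
      = (\<Sum>b\<in>UNIV. \<Sum>c\<in>UNIV. \<Sum>m\<in>UNIV. \<Gamma> e m b x * gu m c x * curv a b c f x)"
    by (subst sum_reverse3) (simp add: mult_ac)
  have e4: "(\<Sum>b\<in>UNIV. \<Sum>c\<in>UNIV. \<Sum>m\<in>UNIV. gu b c x * \<Gamma> e c m x * curv a b m f x)
      = (\<Sum>b\<in>UNIV. \<Sum>c\<in>UNIV. \<Sum>m\<in>UNIV. \<Gamma> e m c x * gu b m x * curv a b c f x)"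
    by (subst sum_swap_inner) (simp add: mult_ac)
  show ?thesis using L R e1 e2 e3 e4 by linarith
qed

definition scal :: "'p \<Rightarrow> real" where
  "scal = (\<lambda>y. \<Sum>b\<in>UNIV. \<Sum>c\<in>UNIV. gu b c y * ric b c y)"

lemma twice_contracted_bianchi:
  assumes x: "x \<in> X"
  shows "2 * (\<Sum>e\<in>UNIV. \<Sum>c\<in>UNIV. gu e c x * cov2 ric e a c x) = d scal a x"
proof -
  have bianchi: "(\<Sum>b\<in>UNIV. \<Sum>c\<in>UNIV. gu b c x * (\<Sum>e\<in>UNIV. cov_curv e a b c e x))
      = (\<Sum>b\<in>UNIV. \<Sum>c\<in>UNIV. gu b c x * cov2 ric a b c x) - (\<Sum>b\<in>UNIV. \<Sum>c\<in>UNIV. gu b c x * cov2 ric b a c x)"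
    by (simp add: contracted_bianchi[OF x] algebra_simps sum_subtractf)
  have "(\<Sum>b\<in>UNIV. \<Sum>c\<in>UNIV. gu b c x * (\<Sum>e\<in>UNIV. cov_curv e a b c e x))
      = (\<Sum>b\<in>UNIV. \<Sum>c\<in>UNIV. \<Sum>e\<in>UNIV. gu b c x * cov_curv e a b c e x)"
    by (simp add: sum_distrib_left)
  also have "\<dots> = (\<Sum>e\<in>UNIV. \<Sum>b\<in>UNIV. \<Sum>c\<in>UNIV. gu b c x * cov_curv e a b c e x)"
    by (rule sum_rotate3')
  also have "\<dots> = (\<Sum>e\<in>UNIV. cov_mixed curv_contr e a e x)"
    by (simp add: contract_cov_curv[OF x])
  also have "\<dots> = div_mixed curv_contr a x" by (simp add: div_mixed_eq_sum)
  also have "\<dots> = div_mixed (\<lambda>a e y. \<Sum>c\<in>UNIV. gu e c y * ric a c y) a x"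
    by (rule div_mixed_cong[OF _ x]) (simp add: curv_contr_eq)
  also have "\<dots> = (\<Sum>e\<in>UNIV. \<Sum>c\<in>UNIV. gu e c x * cov2 ric e a c x)"
    by (rule div_mixed_raise[OF x]) simp
  finally have contracted: "(\<Sum>b\<in>UNIV. \<Sum>c\<in>UNIV. gu b c x * (\<Sum>e\<in>UNIV. cov_curv e a b c e x))
      = (\<Sum>e\<in>UNIV. \<Sum>c\<in>UNIV. gu e c x * cov2 ric e a c x)" .
  have d_scal: "(\<Sum>b\<in>UNIV. \<Sum>c\<in>UNIV. gu b c x * cov2 ric a b c x) = d scal a x"
    unfolding scal_def by (rule d_contract_gu[OF x, symmetric]) simp
  show ?thesis using bianchi contracted d_scal by simp
qed

lemma lower_raised:
  assumes y: "y \<in> X"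
  shows "(\<Sum>q\<in>UNIV. gl q m y * (\<Sum>l\<in>UNIV. gu q l y * v l)) = (if m \<in> sp then v m else 0)"
proof -
  have "(\<Sum>q\<in>UNIV. gl q m y * (\<Sum>l\<in>UNIV. gu q l y * v l)) = (\<Sum>l\<in>UNIV. v l * (\<Sum>q\<in>UNIV. gl m q y * gu q l y))"
    by (simp add: sum_distrib_left sum_distrib_right gl_sym[OF y, of _ m] algebra_simps) (rule sum.swap)
  also have "\<dots> = (if m \<in> sp then v m else 0)"
    using y by (simp add: gl_gu sum_spatial_delta')
  finally show ?thesis .
qed

lemma lower_cov_raised:
  assumes i: "i \<in> sp" and w: "\<And>l. sm (w l)" and x: "x \<in> X"
  shows "(\<Sum>q\<in>UNIV. gl q i x * (d (\<lambda>y. \<Sum>l\<in>UNIV. gu q l y * w l y) a x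
            + (\<Sum>m\<in>UNIV. (\<Sum>l\<in>UNIV. gu m l x * w l x) * \<Gamma> a m q x))) = cov1 w a i x"
proof -
  define Y where "Y q y = (\<Sum>l\<in>UNIV. gu q l y * w l y)" for q y
  have Ysm: "sm (Y q)" for q unfolding Y_def by (intro sm_rules gu_sm w)
  have Yout: "q \<notin> sp \<Longrightarrow> Y q y = 0" for q y unfolding Y_def by (simp add: gu_nonspatial)
  have hY: "y \<in> X \<Longrightarrow> (\<Sum>q\<in>UNIV. gl q m y * Y q y) = (if m \<in> sp then w m y else 0)" for m y
    unfolding Y_def by (rule lower_raised)
  have 1: "(\<Sum>q\<in>UNIV. gl q i x * d (Y q) a x) = d (w i) a x - (\<Sum>q\<in>UNIV. d (gl q i) a x * Y q x)"
  proof -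
    have "d (\<lambda>y. \<Sum>q\<in>UNIV. gl q i y * Y q y) a x = (\<Sum>q\<in>UNIV. gl q i x * d (Y q) a x + d (gl q i) a x * Y q x)"
      using x by (simp add: d_rules sm_rules gl_sm Ysm)
    moreover have "d (\<lambda>y. \<Sum>q\<in>UNIV. gl q i y * Y q y) a x = d (w i) a x"
      by (rule d_cong[OF _ x]) (simp add: hY i)
    ultimately show ?thesis by (simp add: sum.distrib)
  qed
  have 2: "d (gl q i) a x * Y q x = (\<Sum>m\<in>UNIV. \<Gamma> a q m x * gl m i x) * Y q x + (\<Sum>m\<in>UNIV. \<Gamma> a i m x * gl q m x) * Y q x" for q
  proof (cases "q \<in> sp")
    case True then show ?thesis using x i by (simp add: gl_compat algebra_simps)
  next
    case False then show ?thesis by (simp add: Yout)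
  qed
  have 3: "(\<Sum>q\<in>UNIV. (\<Sum>m\<in>UNIV. \<Gamma> a i m x * gl q m x) * Y q x) = (\<Sum>m\<in>UNIV. \<Gamma> a i m x * w m x)"
  proof -
    have "(\<Sum>q\<in>UNIV. (\<Sum>m\<in>UNIV. \<Gamma> a i m x * gl q m x) * Y q x) = (\<Sum>m\<in>UNIV. \<Gamma> a i m x * (\<Sum>q\<in>UNIV. gl q m x * Y q x))"
      by (simp add: sum_distrib_left sum_distrib_right algebra_simps) (rule sum.swap)
    also have "\<dots> = (\<Sum>m\<in>UNIV. \<Gamma> a i m x * w m x)"
      using x by (intro sum.cong) (auto simp: hY \<Gamma>_nonspatial)
    finally show ?thesis .
  qed
  have 4: "(\<Sum>q\<in>UNIV. (\<Sum>m\<in>UNIV. \<Gamma> a q m x * gl m i x) * Y q x) = (\<Sum>q\<in>UNIV. gl q i x * (\<Sum>m\<in>UNIV. Y m x * \<Gamma> a m q x))"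
    by (simp add: sum_distrib_left sum_distrib_right algebra_simps) (rule sum.swap)
  show ?thesis
    unfolding Y_def[symmetric] cov1_def
    using 1 3 4 by (simp add: 2 sum.distrib distrib_left)
qed

end

section \<open>The connection of a modified Ricci flow, abstractly\<close>

text \<open>t0 is the time index; \<Gamma>_space_time and \<Gamma>_time_time are the defining formulas of
  tilde-Gamma_k0 and tilde-Gamma_00.\<close>

locale ricci_flow_connection = spatial_metric_connection X sm d \<Gamma> sp gu gl
  for X :: "'p set" and sm and d :: "('p \<Rightarrow> real) \<Rightarrow> 'i::finite \<Rightarrow> 'p \<Rightarrow> real" and \<Gamma> sp gu gl +
  fixes f \<phi> :: "'p \<Rightarrow> real" and t0 :: 'i
  assumes f_sm: "sm f" and \<phi>_sm: "sm \<phi>"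
    and spatial_indices: "sp = - {t0}"
    and \<Gamma>_space_time: "k \<noteq> t0 \<Longrightarrow> x \<in> X \<Longrightarrow> \<Gamma> k t0 p x = (\<Sum>l\<in>UNIV. gu p l x * (hess f k l x - ric k l x))"
    and \<Gamma>_time_time: "x \<in> X \<Longrightarrow> \<Gamma> t0 t0 p x = (\<Sum>l\<in>UNIV. gu p l x * d \<phi> l x)"
    and \<phi>_eq: "x \<in> X \<Longrightarrow> \<phi> x = - (1/2) * scal x + d f t0 x
        - (1/2) * (\<Sum>b\<in>UNIV. \<Sum>c\<in>UNIV. gu b c x * (d f b x * d f c x))"
begin

definition S :: "'i \<Rightarrow> 'i \<Rightarrow> 'p \<Rightarrow> real" where
  "S k l = (\<lambda>x. ric k l x - hess f k l x)"

definition lap :: "'p \<Rightarrow> real" where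
  "lap = (\<lambda>y. \<Sum>b\<in>UNIV. \<Sum>c\<in>UNIV. gu b c y * hess f b c y)"

definition grad_sq :: "'p \<Rightarrow> real" where
  "grad_sq = (\<lambda>y. \<Sum>b\<in>UNIV. \<Sum>c\<in>UNIV. gu b c y * (d f b y * d f c y))"

lemma scal_sm[simp]: "sm scal" unfolding scal_def by (intro sm_rules gu_sm ric_sm)
lemma grad_sq_sm[simp]: "sm grad_sq" unfolding grad_sq_def by (intro sm_rules gu_sm f_sm)
lemma lap_sm[simp]: "sm lap" unfolding lap_def by (intro sm_rules gu_sm hess_sm f_sm)
lemma S_sm[simp]: "sm (S k l)" unfolding S_def by (intro sm_rules hess_sm f_sm ric_sm)

lemma S_sym: "x \<in> X \<Longrightarrow> S k l x = S l k x"
  unfolding S_def by (simp add: hess_sym[OF f_sm] ric_sym)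

lemma d_grad_sq:
  assumes x: "x \<in> X"
  shows "d grad_sq a x = 2 * (\<Sum>b\<in>UNIV. \<Sum>c\<in>UNIV. gu b c x * (hess f a c x * d f b x))"
proof -
  have "d grad_sq a x = (\<Sum>b\<in>UNIV. \<Sum>c\<in>UNIV. gu b c x * (hess f a b x * d f c x + d f b x * hess f a c x))"
    unfolding grad_sq_def using d_contract_gu_product[OF x, of "\<lambda>m. d f m" "\<lambda>m. d f m" a] f_sm
    by (simp add: hess_def sm_d)
  also have "\<dots> = (\<Sum>b\<in>UNIV. \<Sum>c\<in>UNIV. gu b c x * (hess f a b x * d f c x))
       + (\<Sum>b\<in>UNIV. \<Sum>c\<in>UNIV. gu b c x * (hess f a c x * d f b x))"
    by (simp add: algebra_simps sum.distrib)
  also have "(\<Sum>b\<in>UNIV. \<Sum>c\<in>UNIV. gu b c x * (hess f a b x * d f c x))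
     = (\<Sum>b\<in>UNIV. \<Sum>c\<in>UNIV. gu b c x * (hess f a c x * d f b x))"
    by (subst sum.swap) (simp add: gu_sym[OF x])
  finally show ?thesis by simp
qed

lemma d_\<phi>:
  assumes x: "x \<in> X"
  shows "d \<phi> a x = - (1/2) * d scal a x + d (d f t0) a x - (1/2) * d grad_sq a x"
proof -
  have "d \<phi> a x = d (\<lambda>y. - (1/2) * scal y + d f t0 y - (1/2) * grad_sq y) a x"
    by (rule d_cong[OF _ x]) (simp add: \<phi>_eq grad_sq_def)
  also have "\<dots> = - (1/2) * d scal a x + d (d f t0) a x - (1/2) * d grad_sq a x"
    using x by (simp only: d_diff d_add d_cmult sm_rules scal_sm grad_sq_sm f_sm)
  finally show ?thesis .
qed

lemma div_hess:
  assumes x: "x \<in> X"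
  shows "(\<Sum>e\<in>UNIV. \<Sum>c\<in>UNIV. gu e c x * cov2 (hess f) e a c x)
     = d lap a x + (\<Sum>p\<in>UNIV. (\<Sum>c\<in>UNIV. gu p c x * ric a c x) * d f p x)"
proof -
  have commute: "cov2 (hess f) e a c x = cov2 (hess f) a e c x - (\<Sum>p\<in>UNIV. curv e a c p x * d f p x)" for e c
    using ricci_identity[of "\<lambda>m. d f m" x e a c] f_sm x by (simp add: hess_def sm_d)
  have lap: "(\<Sum>e\<in>UNIV. \<Sum>c\<in>UNIV. gu e c x * cov2 (hess f) a e c x) = d lap a x"
    unfolding lap_def by (rule d_contract_gu[OF x, symmetric]) (simp add: f_sm)
  have "(\<Sum>e\<in>UNIV. \<Sum>c\<in>UNIV. gu e c x * (\<Sum>p\<in>UNIV. curv e a c p x * d f p x))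
      = (\<Sum>p\<in>UNIV. \<Sum>e\<in>UNIV. \<Sum>c\<in>UNIV. gu e c x * curv e a c p x * d f p x)"
    by (simp add: sum_distrib_left mult.assoc) (rule sum_rotate3')
  also have "\<dots> = (\<Sum>p\<in>UNIV. - (curv_contr a p x * d f p x))"
    unfolding curv_contr_def by (subst curv_antisym) (simp add: sum_distrib_right sum_negf)
  finally have ric: "(\<Sum>e\<in>UNIV. \<Sum>c\<in>UNIV. gu e c x * (\<Sum>p\<in>UNIV. curv e a c p x * d f p x))
      = - (\<Sum>p\<in>UNIV. (\<Sum>c\<in>UNIV. gu p c x * ric a c x) * d f p x)"
    by (simp add: curv_contr_eq[OF x] sum_negf)
  show ?thesis using lap ric by (simp add: commute algebra_simps sum_subtractf sum.distrib)
qed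

lemma div_S:
  assumes x: "x \<in> X"
  shows "(\<Sum>e\<in>UNIV. \<Sum>c\<in>UNIV. gu e c x * cov2 S e a c x)
     = (1/2) * d scal a x - d lap a x - (\<Sum>p\<in>UNIV. (\<Sum>c\<in>UNIV. gu p c x * ric a c x) * d f p x)"
proof -
  have "cov2 S e a c x = cov2 ric e a c x - cov2 (hess f) e a c x" for e c
    unfolding S_def by (rule cov2_diff) (simp_all add: f_sm x)
  then show ?thesis
    using twice_contracted_bianchi[OF x, of a] div_hess[OF x, of a]
    by (simp only: right_diff_distrib sum_subtractf)
qed

lemma \<Gamma>_space_time_S: "k \<noteq> t0 \<Longrightarrow> x \<in> X \<Longrightarrow> \<Gamma> k t0 p x = - (\<Sum>l\<in>UNIV. gu p l x * S k l x)"
  by (simp add: \<Gamma>_space_time S_def right_diff_distrib sum_subtractf)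

lemma trace_\<Gamma>_time:
  assumes y: "y \<in> X"
  shows "(\<Sum>q\<in>UNIV. \<Gamma> q t0 q y) = lap y - scal y"
proof -
  have "\<Gamma> q t0 q y = - (\<Sum>l\<in>UNIV. gu q l y * S q l y)" for q
  proof (cases "q = t0")
    case True then show ?thesis by (simp add: \<Gamma>_nonspatial gu_nonspatial spatial_indices)
  qed (simp add: \<Gamma>_space_time_S y)
  then show ?thesis
    by (simp only: sum_negf) (simp add: lap_def scal_def S_def right_diff_distrib sum_subtractf)
qed

text \<open>By definition the hypothesis holds for spatial a; the conclusion then makes it true for
  a = t0 as well, so the lemma is applied twice.\<close>

lemma S_time_column:
  assumes \<Gamma>_row: "\<And>p y. y \<in> X \<Longrightarrow> \<Gamma> a t0 p y = - (\<Sum>l\<in>UNIV. gu p l y * S a l y)" and x: "x \<in> X"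
  shows "S a t0 x = - d \<phi> a x"
proof -
  define Y where "Y b e y = (\<Sum>l\<in>UNIV. gu e l y * - S b l y)" for b e y
  have "div_mixed (\<lambda>b p. \<Gamma> b t0 p) a x = div_mixed Y a x"
  proof (rule div_mixed_cong_spatial[OF _ _ x])
    show "\<Gamma> a t0 e y = Y a e y" if "y \<in> X" for e y
      using \<Gamma>_row[OF that] by (simp add: Y_def sum_negf)
    show "\<Gamma> m t0 e x = Y m e x" if "m \<in> sp" for m e
      using that x by (simp add: Y_def sum_negf \<Gamma>_space_time_S spatial_indices)
  qed
  also have "\<dots> = (\<Sum>e\<in>UNIV. \<Sum>c\<in>UNIV. gu e c x * cov2 (\<lambda>b c y. - S b c y) e a c x)"
    unfolding Y_def by (rule div_mixed_raise[OF x]) (simp add: sm_uminus)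
  also have "\<dots> = - (\<Sum>e\<in>UNIV. \<Sum>c\<in>UNIV. gu e c x * cov2 S e a c x)"
    using x by (simp add: cov2_uminus sum_negf)
  finally have div: "div_mixed (\<lambda>b p. \<Gamma> b t0 p) a x = - (\<Sum>e\<in>UNIV. \<Sum>c\<in>UNIV. gu e c x * cov2 S e a c x)" .
  have "d (\<lambda>y. \<Sum>q\<in>UNIV. \<Gamma> q t0 q y) a x = d (\<lambda>y. lap y - scal y) a x"
    by (rule d_cong[OF _ x]) (rule trace_\<Gamma>_time)
  then have tr: "d (\<lambda>y. \<Sum>q\<in>UNIV. \<Gamma> q t0 q y) a x = d lap a x - d scal a x"
    using x by (simp add: d_diff)
  have ric: "ric a t0 x = (1/2) * d scal a x + (\<Sum>p\<in>UNIV. (\<Sum>c\<in>UNIV. gu p c x * ric a c x) * d f p x)"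
    using ric_as_divergence[OF x, of a t0] div tr div_S[OF x, of a] by simp
  have hess: "hess f a t0 x = d (d f t0) a x + (\<Sum>m\<in>UNIV. (\<Sum>l\<in>UNIV. gu m l x * S a l x) * d f m x)"
    using \<Gamma>_row[OF x] by (simp add: hess_def cov1_def sum_negf)
  have "(\<Sum>m\<in>UNIV. (\<Sum>l\<in>UNIV. gu m l x * S a l x) * d f m x)
     = (\<Sum>p\<in>UNIV. (\<Sum>c\<in>UNIV. gu p c x * ric a c x) * d f p x)
       - (\<Sum>b\<in>UNIV. \<Sum>c\<in>UNIV. gu b c x * (hess f a c x * d f b x))"
    unfolding S_def by (simp add: sum_distrib_right sum_distrib_left sum_subtractf algebra_simps)
  then show ?thesis
    using ric hess d_\<phi>[OF x, of a] d_grad_sq[OF x, of a] by (simp add: S_def[of a t0])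
qed

lemma S_space_time: "k \<noteq> t0 \<Longrightarrow> x \<in> X \<Longrightarrow> S k t0 x = - d \<phi> k x"
  by (rule S_time_column) (simp_all add: \<Gamma>_space_time_S)

lemma S_time_time:
  assumes x: "x \<in> X"
  shows "S t0 t0 x = - d \<phi> t0 x"
proof (rule S_time_column[OF _ x])
  fix p y assume y: "y \<in> X"
  have "gu p l y * d \<phi> l y = - (gu p l y * S t0 l y)" for l
  proof (cases "l = t0")
    case False then show ?thesis using S_sym[OF y, of t0 l] S_space_time[OF False y] by simp
  qed (simp add: gu_nonspatial spatial_indices)
  then show "\<Gamma> t0 t0 p y = - (\<Sum>l\<in>UNIV. gu p l y * S t0 l y)"
    by (simp add: \<Gamma>_time_time y sum_negf)
qed

lemma S_time_row:
  assumes x: "x \<in> X"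
  shows "S t0 b x = - d \<phi> b x"
proof (cases "b = t0")
  case False then show ?thesis using S_sym[OF x, of t0 b] S_space_time[OF False x] by simp
qed (simp add: S_time_time x)

lemma \<Gamma>_time:
  assumes x: "x \<in> X"
  shows "\<Gamma> a t0 p x = - (\<Sum>l\<in>UNIV. gu p l x * S a l x)"
proof (cases "a = t0")
  case True
  have "gu p l x * d \<phi> l x = - (gu p l x * S t0 l x)" for l
    by (cases "l = t0") (simp_all add: gu_nonspatial spatial_indices S_time_row x)
  with True show ?thesis by (simp add: \<Gamma>_time_time x sum_negf)
qed (simp add: \<Gamma>_space_time_S x)

lemma \<Gamma>_time_S_sym:
  assumes x: "x \<in> X"
  shows "(\<Sum>m\<in>UNIV. \<Gamma> a t0 m x * S m b x) = (\<Sum>m\<in>UNIV. \<Gamma> b t0 m x * S m a x)"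
proof -
  have "(\<Sum>m\<in>UNIV. \<Gamma> a t0 m x * S m b x) = - (\<Sum>m\<in>UNIV. \<Sum>l\<in>UNIV. gu m l x * S a l x * S m b x)"
    by (simp add: \<Gamma>_time[OF x] sum_distrib_right sum_negf)
  also have "\<dots> = - (\<Sum>m\<in>UNIV. \<Sum>l\<in>UNIV. gu l m x * S a m x * S l b x)"
    by (subst sum.swap) rule
  also have "\<dots> = (\<Sum>m\<in>UNIV. \<Gamma> b t0 m x * S m a x)"
    by (simp add: \<Gamma>_time[OF x] sum_distrib_right sum_distrib_left sum_negf gu_sym[OF x] S_sym[OF x] mult_ac)
  finally show ?thesis .
qed

lemma cov2_S_time:
  assumes x: "x \<in> X"
  shows "cov2 S a t0 b x = - hess \<phi> a b x - (\<Sum>m\<in>UNIV. \<Gamma> a t0 m x * S m b x)"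
proof -
  have "d (S t0 b) a x = d (\<lambda>y. - d \<phi> b y) a x"
    by (rule d_cong[OF _ x]) (rule S_time_row)
  then have "d (S t0 b) a x = - d (d \<phi> b) a x"
    using x by (simp add: d_uminus sm_d \<phi>_sm)
  then show ?thesis
    unfolding cov2_def hess_def cov1_def by (simp add: S_time_row[OF x] sum_negf)
qed

lemma cov2_S_time_sym: "x \<in> X \<Longrightarrow> cov2 S a t0 b x = cov2 S b t0 a x"
  by (simp add: cov2_S_time hess_sym[OF \<phi>_sm] \<Gamma>_time_S_sym)

lemma curv_time_lowered:
  assumes i: "i \<noteq> t0" and x: "x \<in> X"
  shows "(\<Sum>q\<in>UNIV. gl q i x * curv a b t0 q x) = cov2 S b a i x - cov2 S a b i x"
proof -
  have lowered: "(\<Sum>q\<in>UNIV. gl q i x * (d (\<Gamma> b t0 q) a x + (\<Sum>m\<in>UNIV. \<Gamma> b t0 m x * \<Gamma> a m q x)))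
      = - cov2 S a b i x - (\<Sum>m\<in>UNIV. \<Gamma> a b m x * S m i x)" for a b
  proof -
    have \<Gamma>_b: "\<Gamma> b t0 q y = (\<Sum>l\<in>UNIV. gu q l y * - S b l y)" if "y \<in> X" for q y
      using \<Gamma>_time[OF that] by (simp add: sum_negf)
    have "d (\<Gamma> b t0 q) a x = d (\<lambda>y. \<Sum>l\<in>UNIV. gu q l y * - S b l y) a x" for q
      by (rule d_cong[OF _ x]) (rule \<Gamma>_b)
    then have "(\<Sum>q\<in>UNIV. gl q i x * (d (\<Gamma> b t0 q) a x + (\<Sum>m\<in>UNIV. \<Gamma> b t0 m x * \<Gamma> a m q x)))
        = cov1 (\<lambda>l y. - S b l y) a i x"
      using lower_cov_raised[of i "\<lambda>l y. - S b l y" x a] i x by (simp add: \<Gamma>_b spatial_indices sm_uminus)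
    also have "\<dots> = - cov1 (S b) a i x"
      using x by (simp add: cov1_uminus)
    finally show ?thesis unfolding cov2_def cov1_def by simp
  qed
  have "curv a b t0 q x = (d (\<Gamma> b t0 q) a x + (\<Sum>m\<in>UNIV. \<Gamma> b t0 m x * \<Gamma> a m q x))
      - (d (\<Gamma> a t0 q) b x + (\<Sum>m\<in>UNIV. \<Gamma> a t0 m x * \<Gamma> b m q x))" for q
    unfolding curv_def by (simp add: sum_subtractf)
  then show ?thesis
    using lowered[of a b] lowered[of b a] by (simp add: right_diff_distrib sum_subtractf \<Gamma>_sym[OF x, of b a])
qed

lemma S_cov_identities:
  assumes x: "x \<in> X"
  shows "i \<noteq> t0 \<Longrightarrow> cov2 S j k i x = cov2 S k j i x + (\<Sum>q\<in>UNIV. gl q i x * curv k j t0 q x)"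
    and "k \<noteq> t0 \<Longrightarrow> cov2 S t0 k i x = cov2 S k t0 i x + (\<Sum>q\<in>UNIV. gl q k x * curv i t0 t0 q x)"
    and "cov2 S j t0 k x = cov2 S k t0 j x"
    and "cov2 S t0 t0 k x = cov2 S k t0 t0 x"
proof -
  show "i \<noteq> t0 \<Longrightarrow> cov2 S j k i x = cov2 S k j i x + (\<Sum>q\<in>UNIV. gl q i x * curv k j t0 q x)"
    by (simp add: curv_time_lowered x)
  have "cov2 S t0 k i x = cov2 S t0 i k x"
    by (rule cov2_sym[OF S_sym x])
  then show "k \<noteq> t0 \<Longrightarrow> cov2 S t0 k i x = cov2 S k t0 i x + (\<Sum>q\<in>UNIV. gl q k x * curv i t0 t0 q x)"
    by (simp add: curv_time_lowered x cov2_S_time_sym[OF x, of i k])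
  show "cov2 S j t0 k x = cov2 S k t0 j x" "cov2 S t0 t0 k x = cov2 S k t0 t0 x"
    by (rule cov2_S_time_sym[OF x])+
qed

end

section \<open>Partial derivatives on a space-time slab\<close>

lemma differentiable_has_frechet_derivative:
  "F differentiable net \<Longrightarrow> (F has_derivative frechet_derivative F net) net"
  using frechet_derivative_works by blast

lemma has_derivative_cong_on:
  assumes "(F has_derivative F') (at x within E)" "x \<in> E" "\<And>y. y \<in> E \<Longrightarrow> F y = G y"
  shows "(G has_derivative F') (at x within E)"
  by (rule has_derivative_transform_within[OF assms(1) zero_less_one assms(2)]) (use assms(3) in auto)

lemma pd_cong:
  assumes "\<And>y. y \<in> E \<Longrightarrow> F y = G y" and "x \<in> E"
  shows "pd E F a x = pd E G a x"
proof -
  have "(F has_derivative h) (at x within E) \<longleftrightarrow> (G has_derivative h) (at x within E)" for h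
    using has_derivative_cong_on[of F h x E G] has_derivative_cong_on[of G h x E F] assms by auto
  then show ?thesis unfolding pd_def frechet_derivative_def by simp
qed

lemma differentiable_cong_on:
  assumes "\<And>y. y \<in> E \<Longrightarrow> F y = G y" and "x \<in> E" and "F differentiable (at x within E)"
  shows "G differentiable (at x within E)"
  using assms has_derivative_cong_on[of F _ x E G] unfolding differentiable_def by blast

lemma Ck_cong: "(\<And>y. y \<in> E \<Longrightarrow> F y = G y) \<Longrightarrow> Ck k E F \<Longrightarrow> Ck k E G"
proof (induction k arbitrary: F G)
  case 0 then show ?case using continuous_on_cong[of E E F G] by simp
next
  case (Suc k)
  have "\<forall>p\<in>E. G differentiable (at p within E)"
    using Suc.prems differentiable_cong_on[of E F G] by auto
  moreover have "Ck k E (pd E G a)" for a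
    using Suc.IH[of "pd E F a" "pd E G a"] Suc.prems pd_cong[of E F G _ a] by auto
  ultimately show ?case by simp
qed

lemma Ck_SucD: "Ck (Suc k) E F \<Longrightarrow> Ck k E F"
proof (induction k arbitrary: F)
  case 0
  then have "\<forall>p\<in>E. F differentiable (at p within E)" by simp
  then show ?case
    by (simp add: continuous_on_eq_continuous_within differentiable_imp_continuous_within)
qed simp

lemma Ck_Suc_differentiable: "Ck (Suc k) E F \<Longrightarrow> p \<in> E \<Longrightarrow> F differentiable (at p within E)"
  by simp

lemma Ck_Suc_pd: "Ck (Suc k) E F \<Longrightarrow> Ck k E (pd E F a)"
  by simp

lemma Ck_SucI:
  "(\<And>p. p \<in> E \<Longrightarrow> F differentiable (at p within E)) \<Longrightarrow> (\<And>a. Ck k E (pd E F a)) \<Longrightarrow> Ck (Suc k) E F"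
  by simp

locale slab =
  fixes U :: "(real^'n::finite) set" and T :: real
  assumes U_open: "open U"
begin

abbreviation "E \<equiv> U \<times> {0..<T}"

definition inner_slab :: "'n pt set" where "inner_slab = U \<times> {0<..<T}"

lemma open_inner_slab: "open inner_slab"
  unfolding inner_slab_def by (intro open_Times U_open open_greaterThanLessThan)

lemma inner_slab_subset: "inner_slab \<subseteq> E"
  unfolding inner_slab_def by auto

lemma at_within_inner_slab: "p \<in> inner_slab \<Longrightarrow> at p within E = at p"
  by (rule at_within_interior) (rule interiorI[OF open_inner_slab _ inner_slab_subset])

text \<open>E is not open, but it contains a segment in every coordinate direction at each of its
  points, which makes derivatives within E unique.\<close>

lemma slab_directions:
  assumes x: "x \<in> E" and i: "i \<in> Basis" and e: "e > 0"
  shows "\<exists>d. 0 < \<bar>d\<bar> \<and> \<bar>d\<bar> < e \<and> x + d *\<^sub>R i \<in> E"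
proof -
  obtain y t where xe: "x = (y, t)" by (cases x)
  have y: "y \<in> U" and t: "0 \<le> t" "t < T" using x xe by auto
  from i have "i \<in> (\<lambda>u. (u, 0)) ` Basis \<or> i \<in> (\<lambda>v. (0, v)) ` Basis"
    unfolding Basis_prod_def by auto
  then show ?thesis
  proof
    assume "i \<in> (\<lambda>u. (u, 0)) ` Basis"
    then obtain u where u: "u \<in> (Basis :: (real^'n) set)" and iu: "i = (u, 0)" by auto
    obtain r where r: "r > 0" "ball y r \<subseteq> U" using U_open y open_contains_ball by blast
    define d where "d = min e r / 2"
    have d: "0 < d" "d < e" "d < r" using r e by (auto simp: d_def)
    have "y + d *\<^sub>R u \<in> ball y r" using d u by (simp add: dist_norm)
    then have "y + d *\<^sub>R u \<in> U" using r by auto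
    then have "x + d *\<^sub>R i \<in> E" using xe iu t by simp
    then show ?thesis using d by (intro exI[of _ d]) auto
  next
    assume "i \<in> (\<lambda>v. (0, v)) ` Basis"
    then have iu: "i = (0, 1)" by auto
    define d where "d = min e (T - t) / 2"
    have d: "0 < d" "d < e" "t + d < T" using t e unfolding d_def by (auto simp: min_def field_simps)
    have "x + d *\<^sub>R i \<in> E" using xe iu t d y by simp
    then show ?thesis using d by (intro exI[of _ d]) auto
  qed
qed

lemma pd_eq_derivative:
  assumes x: "x \<in> E" and F1: "(F has_derivative F1) (at x within E)"
  shows "pd E F a x = F1 (dirv a)"
proof -
  have "F differentiable (at x within E)" using F1 by (auto simp: differentiable_def)
  then have "(F has_derivative frechet_derivative F (at x within E)) (at x within E)"
    by (rule differentiable_has_frechet_derivative)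
  then have "frechet_derivative F (at x within E) = F1"
    by (rule frechet_derivative_unique_within[OF _ F1 slab_directions[OF x]])
  then show ?thesis unfolding pd_def by simp
qed

lemma pd_const: "x \<in> E \<Longrightarrow> pd E (\<lambda>y. c) a x = 0"
  using pd_eq_derivative[of x "\<lambda>y. c" "\<lambda>h. 0"] by simp

lemma pd_add:
  assumes x: "x \<in> E" and F: "F differentiable (at x within E)" and G: "G differentiable (at x within E)"
  shows "pd E (\<lambda>y. F y + G y) a x = pd E F a x + pd E G a x"
  using pd_eq_derivative[OF x has_derivative_add[OF differentiable_has_frechet_derivative[OF F]
      differentiable_has_frechet_derivative[OF G]]]
  by (simp add: pd_def)

lemma pd_mult:
  assumes x: "x \<in> E" and F: "F differentiable (at x within E)" and G: "G differentiable (at x within E)"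
  shows "pd E (\<lambda>y. F y * G y) a x = F x * pd E G a x + pd E F a x * G x"
  using pd_eq_derivative[OF x has_derivative_mult[OF differentiable_has_frechet_derivative[OF F]
      differentiable_has_frechet_derivative[OF G]]]
  by (simp add: pd_def)

lemma pd_inverse:
  assumes x: "x \<in> E" and F: "F differentiable (at x within E)" and nz: "F x \<noteq> 0"
  shows "pd E (\<lambda>y. inverse (F y)) a x = - (inverse (F x) * pd E F a x * inverse (F x))"
  using pd_eq_derivative[OF x Deriv.has_derivative_inverse[OF nz differentiable_has_frechet_derivative[OF F]]]
  by (simp add: pd_def)

lemma Ck_const: "Ck k E (\<lambda>y. c)"
proof (induction k arbitrary: c)
  case (Suc k)
  have "Ck k E (pd E (\<lambda>y. c) a)" for a
    by (rule Ck_cong[OF _ Suc.IH[of 0, simplified]]) (simp add: pd_const)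
  then show ?case by (intro Ck_SucI) auto
qed simp

lemma Ck_add: "Ck k E F \<Longrightarrow> Ck k E G \<Longrightarrow> Ck k E (\<lambda>y. F y + G y)"
proof (induction k arbitrary: F G)
  case 0 then show ?case by (simp add: continuous_on_add)
next
  case (Suc k)
  note dF = Ck_Suc_differentiable[OF Suc.prems(1)] and dG = Ck_Suc_differentiable[OF Suc.prems(2)]
  have "Ck k E (pd E (\<lambda>y. F y + G y) a)" for a
    by (rule Ck_cong[OF _ Suc.IH[OF Ck_Suc_pd[OF Suc.prems(1)] Ck_Suc_pd[OF Suc.prems(2)]]])
       (simp add: pd_add dF dG)
  then show ?case by (intro Ck_SucI) (auto simp: dF dG)
qed

lemma Ck_mult: "Ck k E F \<Longrightarrow> Ck k E G \<Longrightarrow> Ck k E (\<lambda>y. F y * G y)"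
proof (induction k arbitrary: F G)
  case 0 then show ?case by (simp add: continuous_on_mult)
next
  case (Suc k)
  note dF = Ck_Suc_differentiable[OF Suc.prems(1)] and dG = Ck_Suc_differentiable[OF Suc.prems(2)]
  have F: "Ck k E F" and G: "Ck k E G" using Suc.prems Ck_SucD by blast+
  have "Ck k E (pd E (\<lambda>y. F y * G y) a)" for a
  proof (rule Ck_cong)
    show "Ck k E (\<lambda>y. F y * pd E G a y + pd E F a y * G y)"
      by (intro Ck_add Suc.IH F G Ck_Suc_pd[OF Suc.prems(1)] Ck_Suc_pd[OF Suc.prems(2)])
  qed (simp add: pd_mult dF dG)
  then show ?case by (intro Ck_SucI) (auto simp: dF dG)
qed

lemma Ck_inverse: "Ck k E F \<Longrightarrow> (\<And>y. y \<in> E \<Longrightarrow> F y \<noteq> 0) \<Longrightarrow> Ck k E (\<lambda>y. inverse (F y))"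
proof (induction k arbitrary: F)
  case 0 then show ?case by (simp add: continuous_on_inverse)
next
  case (Suc k)
  note dF = Ck_Suc_differentiable[OF Suc.prems(1)]
  have F: "Ck k E F" using Suc.prems Ck_SucD by blast
  have I: "Ck k E (\<lambda>y. inverse (F y))" using Suc.IH[OF F] Suc.prems(2) by blast
  have "Ck k E (pd E (\<lambda>y. inverse (F y)) a)" for a
  proof (rule Ck_cong)
    have "Ck k E (\<lambda>y. (-1) * (inverse (F y) * pd E F a y * inverse (F y)))"
      by (intro Ck_mult Ck_const I Ck_Suc_pd[OF Suc.prems(1)])
    then show "Ck k E (\<lambda>y. - (inverse (F y) * pd E F a y * inverse (F y)))" by simp
  qed (simp add: pd_inverse dF Suc.prems(2))
  moreover have "\<And>p. p \<in> E \<Longrightarrow> (\<lambda>y. inverse (F y)) differentiable (at p within E)"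
    using dF Suc.prems(2) by (simp add: differentiable_inverse)
  ultimately show ?case by (intro Ck_SucI) auto
qed

lemma smooth_fun_Ck: "smooth_fun E F \<Longrightarrow> Ck k E F"
  unfolding smooth_fun_def by blast

lemma smooth_fun_continuous: "smooth_fun E F \<Longrightarrow> continuous_on E F"
  using smooth_fun_Ck[of F 0] by simp

lemma smooth_fun_differentiable: "smooth_fun E F \<Longrightarrow> x \<in> E \<Longrightarrow> F differentiable (at x within E)"
  using Ck_Suc_differentiable[OF smooth_fun_Ck[of F "Suc 0"]] by simp

lemma smooth_fun_const: "smooth_fun E (\<lambda>y. c)"
  unfolding smooth_fun_def by (simp add: Ck_const)

lemma smooth_fun_add: "smooth_fun E F \<Longrightarrow> smooth_fun E G \<Longrightarrow> smooth_fun E (\<lambda>y. F y + G y)"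
  unfolding smooth_fun_def by (simp add: Ck_add)

lemma smooth_fun_mult: "smooth_fun E F \<Longrightarrow> smooth_fun E G \<Longrightarrow> smooth_fun E (\<lambda>y. F y * G y)"
  unfolding smooth_fun_def by (simp add: Ck_mult)

lemma smooth_fun_pd: "smooth_fun E F \<Longrightarrow> smooth_fun E (pd E F a)"
  unfolding smooth_fun_def using Ck_Suc_pd by blast

lemma smooth_fun_inverse:
  "smooth_fun E F \<Longrightarrow> (\<And>y. y \<in> E \<Longrightarrow> F y \<noteq> 0) \<Longrightarrow> smooth_fun E (\<lambda>y. inverse (F y))"
  unfolding smooth_fun_def by (simp add: Ck_inverse)

lemma smooth_fun_cong: "(\<And>y. y \<in> E \<Longrightarrow> F y = G y) \<Longrightarrow> smooth_fun E F \<Longrightarrow> smooth_fun E G"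
  unfolding smooth_fun_def using Ck_cong by blast

lemma smooth_fun_sum: "(\<And>i. i \<in> A \<Longrightarrow> smooth_fun E (F i)) \<Longrightarrow> smooth_fun E (\<lambda>y. \<Sum>i\<in>A. F i y)"
  by (induction A rule: infinite_finite_induct) (simp_all add: smooth_fun_const smooth_fun_add)

lemma smooth_fun_prod: "(\<And>i. i \<in> A \<Longrightarrow> smooth_fun E (F i)) \<Longrightarrow> smooth_fun E (\<lambda>y. \<Prod>i\<in>A. F i y)"
  by (induction A rule: infinite_finite_induct) (simp_all add: smooth_fun_const smooth_fun_mult)

lemma smooth_fun_det:
  assumes "\<And>i j. smooth_fun E (\<lambda>p. M p $ i $ j)"
  shows "smooth_fun E (\<lambda>p. det (M p :: real^'m::finite^'m))"
  unfolding det_def by (intro smooth_fun_sum smooth_fun_mult smooth_fun_const smooth_fun_prod assms)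

lemma norm_dirv: "norm (dirv a :: 'n pt) = 1"
  by (cases a) (simp_all add: dirv_def norm_Pair)

lemma DERIV_along_line:
  assumes dG: "G differentiable (at (y + t *\<^sub>R w) within E)" and p: "y + t *\<^sub>R w \<in> inner_slab"
  shows "((\<lambda>t. G (y + t *\<^sub>R w)) has_real_derivative frechet_derivative G (at (y + t *\<^sub>R w) within E) w) (at t)"
proof -
  define G' where "G' = frechet_derivative G (at (y + t *\<^sub>R w) within E)"
  have 1: "(G has_derivative G') (at (y + t *\<^sub>R w))"
    using differentiable_has_frechet_derivative[OF dG] at_within_inner_slab[OF p] unfolding G'_def by simp
  have lin: "bounded_linear G'" using 1 has_derivative_bounded_linear by blast
  have 2: "((\<lambda>t. y + t *\<^sub>R w) has_derivative (\<lambda>h. h *\<^sub>R w)) (at t)"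
    by (auto intro!: derivative_eq_intros)
  have "((\<lambda>t. G (y + t *\<^sub>R w)) has_derivative (\<lambda>h. G' (h *\<^sub>R w))) (at t)"
    using has_derivative_compose[OF 2 1] by simp
  then show ?thesis unfolding G'_def[symmetric]
    by (rule has_derivative_imp_has_field_derivative) (simp add: linear.scaleR[OF bounded_linear.linear[OF lin]])
qed

lemma second_difference_mvt:
  assumes F: "smooth_fun E F" and s: "s > 0"
    and ball: "\<And>\<sigma> \<rho>. 0 \<le> \<sigma> \<Longrightarrow> \<sigma> \<le> s \<Longrightarrow> 0 \<le> \<rho> \<Longrightarrow> \<rho> \<le> s \<Longrightarrow> x + \<sigma> *\<^sub>R dirv a + \<rho> *\<^sub>R dirv b \<in> inner_slab"
  shows "\<exists>\<xi> \<eta>. 0 \<le> \<xi> \<and> \<xi> \<le> s \<and> 0 \<le> \<eta> \<and> \<eta> \<le> s \<and>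
     F (x + s *\<^sub>R dirv a + s *\<^sub>R dirv b) - F (x + s *\<^sub>R dirv a + 0 *\<^sub>R dirv b)
       - F (x + 0 *\<^sub>R dirv a + s *\<^sub>R dirv b) + F (x + 0 *\<^sub>R dirv a + 0 *\<^sub>R dirv b)
       = s * s * pd E (pd E F a) b (x + \<xi> *\<^sub>R dirv a + \<eta> *\<^sub>R dirv b)"
proof -
  define u v where "u = (dirv a :: 'n pt)" and "v = (dirv b :: 'n pt)"
  define P where "P \<sigma> \<rho> = x + \<sigma> *\<^sub>R u + \<rho> *\<^sub>R v" for \<sigma> \<rho>
  have inE: "p \<in> inner_slab \<Longrightarrow> p \<in> E" for p using inner_slab_subset by auto
  have dF: "p \<in> inner_slab \<Longrightarrow> F differentiable (at p within E)" for p
    using smooth_fun_differentiable[OF F] inE by blast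
  have dGa: "p \<in> inner_slab \<Longrightarrow> pd E F a differentiable (at p within E)" for p
    using smooth_fun_differentiable[OF smooth_fun_pd[OF F]] inE by blast
  have B: "0 \<le> \<sigma> \<Longrightarrow> \<sigma> \<le> s \<Longrightarrow> 0 \<le> \<rho> \<Longrightarrow> \<rho> \<le> s \<Longrightarrow> P \<sigma> \<rho> \<in> inner_slab" for \<sigma> \<rho>
    using ball unfolding u_def v_def P_def by blast
  have Pu: "P \<sigma> \<rho> = (x + \<rho> *\<^sub>R v) + \<sigma> *\<^sub>R u" for \<sigma> \<rho> unfolding P_def by (simp add: algebra_simps)
  have Pv: "P \<sigma> \<rho> = (x + \<sigma> *\<^sub>R u) + \<rho> *\<^sub>R v" for \<sigma> \<rho> unfolding P_def by simp
  define f1 where "f1 \<sigma> = F (P \<sigma> s) - F (P \<sigma> 0)" for \<sigma>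
  define f1' where "f1' \<sigma> = pd E F a (P \<sigma> s) - pd E F a (P \<sigma> 0)" for \<sigma>
  have D1: "DERIV f1 \<sigma> :> f1' \<sigma>" if "0 \<le> \<sigma>" "\<sigma> \<le> s" for \<sigma>
  proof -
    have p1: "(x + s *\<^sub>R v) + \<sigma> *\<^sub>R u \<in> inner_slab" using B[of \<sigma> s] that s unfolding Pu by simp
    have p2: "(x + 0 *\<^sub>R v) + \<sigma> *\<^sub>R u \<in> inner_slab" using B[of \<sigma> 0] that s unfolding Pu by simp
    have "DERIV (\<lambda>\<sigma>. F ((x + s *\<^sub>R v) + \<sigma> *\<^sub>R u) - F ((x + 0 *\<^sub>R v) + \<sigma> *\<^sub>R u)) \<sigma> :>
       (frechet_derivative F (at ((x + s *\<^sub>R v) + \<sigma> *\<^sub>R u) within E) u - frechet_derivative F (at ((x + 0 *\<^sub>R v) + \<sigma> *\<^sub>R u) within E) u)"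
      by (intro DERIV_diff DERIV_along_line dF p1 p2)
    then show ?thesis unfolding f1_def f1'_def Pu pd_def u_def .
  qed
  obtain \<xi> where \<xi>: "0 < \<xi>" "\<xi> < s" and m1: "f1 s - f1 0 = (s - 0) * f1' \<xi>"
    using MVT2[OF s D1] by blast
  define f2 where "f2 \<rho> = pd E F a (P \<xi> \<rho>)" for \<rho>
  have D2: "DERIV f2 \<rho> :> pd E (pd E F a) b (P \<xi> \<rho>)" if "0 \<le> \<rho>" "\<rho> \<le> s" for \<rho>
  proof -
    have p: "(x + \<xi> *\<^sub>R u) + \<rho> *\<^sub>R v \<in> inner_slab" using B[of \<xi> \<rho>] that \<xi> unfolding Pv by simp
    show ?thesis using DERIV_along_line[OF dGa[OF p] p] unfolding f2_def Pv pd_def v_def .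
  qed
  obtain \<eta> where \<eta>: "0 < \<eta>" "\<eta> < s" and m2: "f2 s - f2 0 = (s - 0) * pd E (pd E F a) b (P \<xi> \<eta>)"
    using MVT2[OF s D2] by blast
  have "F (P s s) - F (P s 0) - F (P 0 s) + F (P 0 0) = s * s * pd E (pd E F a) b (P \<xi> \<eta>)"
    using m1 m2 unfolding f1_def f1'_def f2_def by (simp add: algebra_simps)
  then show ?thesis using \<xi> \<eta> unfolding P_def u_def v_def by (intro exI[of _ \<xi>] exI[of _ \<eta>]) auto
qed

lemma dist_along_dirv:
  fixes x :: "'n pt"
  shows "0 \<le> \<sigma> \<Longrightarrow> 0 \<le> \<rho> \<Longrightarrow> dist (x + \<sigma> *\<^sub>R dirv c + \<rho> *\<^sub>R dirv c') x \<le> \<sigma> + \<rho>"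
proof -
  assume "0 \<le> \<sigma>" "0 \<le> \<rho>"
  have "dist (x + \<sigma> *\<^sub>R dirv c + \<rho> *\<^sub>R dirv c') x = norm (\<sigma> *\<^sub>R (dirv c :: 'n pt) + \<rho> *\<^sub>R dirv c')"
    by (simp add: dist_norm)
  also have "\<dots> \<le> norm (\<sigma> *\<^sub>R (dirv c :: 'n pt)) + norm (\<rho> *\<^sub>R (dirv c' :: 'n pt))"
    by (rule norm_triangle_ineq)
  also have "\<dots> = \<sigma> + \<rho>" using \<open>0 \<le> \<sigma>\<close> \<open>0 \<le> \<rho>\<close> by (simp add: norm_dirv)
  finally show ?thesis .
qed

lemma mixed_partials_meet:
  assumes F: "smooth_fun E F" and x: "x \<in> inner_slab" and \<delta>: "\<delta> > 0"
  shows "\<exists>y z. y \<in> E \<and> z \<in> E \<and> dist y x < \<delta> \<and> dist z x < \<delta> \<and>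
    pd E (pd E F a) b y = pd E (pd E F b) a z"
proof -
  obtain r where r: "r > 0" "ball x r \<subseteq> inner_slab" using open_inner_slab x open_contains_ball by blast
  define s where "s = min r \<delta> / 4"
  have s: "s > 0" "2 * s < r" "2 * s < \<delta>" using r \<delta> unfolding s_def by auto
  have near: "dist (x + \<sigma> *\<^sub>R dirv c + \<rho> *\<^sub>R dirv c') x < \<delta>"
    and inI: "x + \<sigma> *\<^sub>R dirv c + \<rho> *\<^sub>R dirv c' \<in> inner_slab"
    if "0 \<le> \<sigma>" "\<sigma> \<le> s" "0 \<le> \<rho>" "\<rho> \<le> s" for \<sigma> \<rho> c c'
  proof -
    have dist: "dist (x + \<sigma> *\<^sub>R dirv c + \<rho> *\<^sub>R dirv c') x \<le> \<sigma> + \<rho>"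
      using dist_along_dirv that by blast
    then show "dist (x + \<sigma> *\<^sub>R dirv c + \<rho> *\<^sub>R dirv c') x < \<delta>"
      using that s by linarith
    have "x + \<sigma> *\<^sub>R dirv c + \<rho> *\<^sub>R dirv c' \<in> ball x r"
      unfolding mem_ball dist_commute[of x] using dist that s by linarith
    then show "x + \<sigma> *\<^sub>R dirv c + \<rho> *\<^sub>R dirv c' \<in> inner_slab"
      using r(2) by blast
  qed
  obtain \<xi> \<eta> where xe: "0 \<le> \<xi>" "\<xi> \<le> s" "0 \<le> \<eta>" "\<eta> \<le> s" and
    A: "F (x + s *\<^sub>R dirv a + s *\<^sub>R dirv b) - F (x + s *\<^sub>R dirv a + 0 *\<^sub>R dirv b)
       - F (x + 0 *\<^sub>R dirv a + s *\<^sub>R dirv b) + F (x + 0 *\<^sub>R dirv a + 0 *\<^sub>R dirv b)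
       = s * s * pd E (pd E F a) b (x + \<xi> *\<^sub>R dirv a + \<eta> *\<^sub>R dirv b)"
    using second_difference_mvt[OF F s(1) inI] by blast
  obtain \<xi>' \<eta>' where xe': "0 \<le> \<xi>'" "\<xi>' \<le> s" "0 \<le> \<eta>'" "\<eta>' \<le> s" and
    B: "F (x + s *\<^sub>R dirv b + s *\<^sub>R dirv a) - F (x + s *\<^sub>R dirv b + 0 *\<^sub>R dirv a)
       - F (x + 0 *\<^sub>R dirv b + s *\<^sub>R dirv a) + F (x + 0 *\<^sub>R dirv b + 0 *\<^sub>R dirv a)
       = s * s * pd E (pd E F b) a (x + \<xi>' *\<^sub>R dirv b + \<eta>' *\<^sub>R dirv a)"
    using second_difference_mvt[OF F s(1) inI, of b a] by blast
  have comm: "x + s *\<^sub>R dirv b + s *\<^sub>R dirv a = x + s *\<^sub>R dirv a + (s *\<^sub>R dirv b :: 'n pt)"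
    by (simp add: algebra_simps)
  have "s * s * pd E (pd E F a) b (x + \<xi> *\<^sub>R dirv a + \<eta> *\<^sub>R dirv b)
      = s * s * pd E (pd E F b) a (x + \<xi>' *\<^sub>R dirv b + \<eta>' *\<^sub>R dirv a)"
    using A B unfolding comm by (simp only: scaleR_zero_left add_0_right)
  then have "pd E (pd E F a) b (x + \<xi> *\<^sub>R dirv a + \<eta> *\<^sub>R dirv b)
      = pd E (pd E F b) a (x + \<xi>' *\<^sub>R dirv b + \<eta>' *\<^sub>R dirv a)"
    using s(1) by simp
  then show ?thesis
    using near[OF xe, of a b] near[OF xe', of b a] inI[OF xe, of a b] inI[OF xe', of b a] inner_slab_subset
    by blast
qed

lemma pd_comm_inner:
  assumes F: "smooth_fun E F" and x: "x \<in> inner_slab"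
  shows "pd E (pd E F a) b x = pd E (pd E F b) a x"
proof (rule ccontr)
  define Fab where "Fab = pd E (pd E F a) b"
  define Fba where "Fba = pd E (pd E F b) a"
  assume "pd E (pd E F a) b x \<noteq> pd E (pd E F b) a x"
  then have e: "\<bar>Fab x - Fba x\<bar> > 0" unfolding Fab_def Fba_def by simp
  have xE: "x \<in> E" using x inner_slab_subset by auto
  have "continuous_on E Fab" "continuous_on E Fba"
    unfolding Fab_def Fba_def by (intro smooth_fun_continuous smooth_fun_pd F)+
  then obtain d1 d2 where d: "d1 > 0" "d2 > 0"
    and d1: "\<And>y. y \<in> E \<Longrightarrow> dist y x < d1 \<Longrightarrow> dist (Fab y) (Fab x) < \<bar>Fab x - Fba x\<bar> / 2"
    and d2: "\<And>y. y \<in> E \<Longrightarrow> dist y x < d2 \<Longrightarrow> dist (Fba y) (Fba x) < \<bar>Fab x - Fba x\<bar> / 2"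
    using xE e unfolding continuous_on_iff by (metis half_gt_zero)
  obtain y z where "y \<in> E" "z \<in> E" "dist y x < min d1 d2" "dist z x < min d1 d2" "Fab y = Fba z"
    using mixed_partials_meet[OF F x, of "min d1 d2" a b] d unfolding Fab_def Fba_def by auto
  then show False
    using d1[of y] d2[of z] unfolding dist_real_def by (simp add: abs_less_iff abs_if split: if_splits)
qed

lemma pd_comm:
  assumes F: "smooth_fun E F" and x: "x \<in> E"
  shows "pd E (pd E F a) b x = pd E (pd E F b) a x"
proof -
  define h where "h p = pd E (pd E F a) b p - pd E (pd E F b) a p" for p
  have ch: "continuous_on E h" unfolding h_def
    by (intro continuous_on_diff smooth_fun_continuous smooth_fun_pd F)
  have h0: "p \<in> inner_slab \<Longrightarrow> h p = 0" for p unfolding h_def using pd_comm_inner[OF F] by simp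
  obtain y t where xt: "x = (y, t)" by (cases x)
  have y: "y \<in> U" and t: "0 \<le> t" "t < T" using x xt by auto
  define c where "c = (T - t) / 2"
  have c: "c > 0" "t + c < T" using t unfolding c_def by (auto simp: field_simps)
  define X where "X n = (y, t + c * inverse (real (Suc n)))" for n
  have XI: "X n \<in> inner_slab" for n
  proof -
    have a: "0 < c * inverse (real (Suc n))" using c by simp
    have b: "c * inverse (real (Suc n)) \<le> c" using c by (simp add: field_simps)
    have "0 < t + c * inverse (real (Suc n))" "t + c * inverse (real (Suc n)) < T" using a b t c by linarith+
    then show ?thesis unfolding X_def inner_slab_def using y by simp
  qed
  have "X \<longlonglongrightarrow> (y, t + c * 0)" unfolding X_def
    by (intro tendsto_Pair tendsto_const tendsto_add tendsto_mult LIMSEQ_inverse_real_of_nat)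
  then have XL: "X \<longlonglongrightarrow> x" using xt by simp
  have "continuous (at x within E) h" using ch x continuous_on_eq_continuous_within by blast
  then have "(h \<circ> X) \<longlonglongrightarrow> h x"
    using XL XI inner_slab_subset unfolding continuous_within_sequentially by blast
  moreover have "h \<circ> X = (\<lambda>n. 0)" using XI h0 by (auto simp: comp_def)
  ultimately have "h x = 0" using LIMSEQ_unique tendsto_const by metis
  then show ?thesis unfolding h_def by simp
qed

end

lemma has_derivative_shift:
  fixes F :: "'n::finite pt \<Rightarrow> real"
  assumes F: "(F has_derivative F') (at (shift \<tau> q) within D)" and sub: "shift \<tau> ` D' \<subseteq> D"
  shows "((\<lambda>q. F (shift \<tau> q)) has_derivative F') (at q within D')"
proof -
  have "shift \<tau> = (\<lambda>q::'n pt. q + (0, \<tau>))" by (auto simp: shift_def fun_eq_iff)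
  then have s: "((shift \<tau> :: 'n pt \<Rightarrow> 'n pt) has_derivative (\<lambda>h. h)) (at q within D')"
    by (auto intro!: derivative_eq_intros)
  have "(F has_derivative F') (at (shift \<tau> q) within shift \<tau> ` D')"
    by (rule has_derivative_subset[OF F sub])
  from has_derivative_in_compose[OF s this] show ?thesis by simp
qed

lemma shift_0[simp]: "shift 0 p = p"
  by (simp add: shift_def)

lemma matrix_inv_mult:
  fixes A :: "real^'n::finite^'n"
  assumes "invertible A"
  shows "A ** matrix_inv A = mat 1" "matrix_inv A ** A = mat 1"
proof -
  have "\<exists>A'. A ** A' = mat 1 \<and> A' ** A = mat 1" using assms unfolding invertible_def by blast
  then have "A ** matrix_inv A = mat 1 \<and> matrix_inv A ** A = mat 1"
    unfolding matrix_inv_def by (rule someI_ex)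
  then show "A ** matrix_inv A = mat 1" "matrix_inv A ** A = mat 1" by auto
qed

lemma matrix_inv_cramer:
  fixes A :: "real^'n::finite^'n"
  assumes A: "invertible A"
  shows "matrix_inv A $ k $ l = det (\<chi> i j. if j = k then (if i = l then 1 else 0) else A$i$j) / det A"
proof -
  have d: "det A \<noteq> 0" using A invertible_det_nz by blast
  define x where "x = matrix_inv A *v axis l 1"
  have "A *v x = (A ** matrix_inv A) *v axis l 1" unfolding x_def by (simp add: matrix_vector_mul_assoc)
  also have "\<dots> = axis l 1" using matrix_inv_mult[OF A] by simp
  finally have "x = (\<chi> k. det(\<chi> i j. if j=k then (axis l 1 :: real^'n)$i else A$i$j) / det A)"
    using cramer[OF d] by blast
  then have "x $ k = det(\<chi> i j. if j=k then (axis l 1 :: real^'n)$i else A$i$j) / det A" by simp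
  moreover have "x $ k = matrix_inv A $ k $ l"
    unfolding x_def matrix_vector_mult_def axis_def
    by (simp add: if_distrib[of "\<lambda>z. _ * z"] cong: if_cong)
  moreover have "(\<chi> i j. if j=k then (axis l 1 :: real^'n)$i else A$i$j) = (\<chi> i j. if j = k then (if i = l then 1 else 0) else A$i$j)"
    by (rule arg_cong[where f=vec_lambda]) (simp add: axis_def fun_eq_iff)
  ultimately show ?thesis by simp
qed

lemma pos_def_invertible:
  fixes A :: "real^'n::finite^'n"
  assumes pos: "\<And>v. v \<noteq> 0 \<Longrightarrow> (\<Sum>i\<in>UNIV. \<Sum>j\<in>UNIV. A$i$j * v$i * v$j) > 0"
  shows "invertible A"
proof -
  have ker: "\<forall>x. A *v x = 0 \<longrightarrow> x = 0"
  proof (intro allI impI)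
    fix x assume Ax: "A *v x = 0"
    have "(\<Sum>i\<in>UNIV. \<Sum>j\<in>UNIV. A$i$j * x$i * x$j) = (\<Sum>i\<in>UNIV. x$i * (A *v x)$i)"
      by (simp add: matrix_vector_mult_def sum_distrib_left algebra_simps)
    also have "\<dots> = 0" using Ax by simp
    finally show "x = 0" using pos[of x] by force
  qed
  then obtain B where "B ** A = mat 1" using matrix_left_invertible_ker by blast
  then have "A ** B = mat 1" "B ** A = mat 1" using matrix_left_right_inverse by blast+
  then show ?thesis unfolding invertible_def by blast
qed

lemma matrix_inv_symmetric:
  fixes A :: "real^'n::finite^'n"
  assumes A: "invertible A" and sym: "transpose A = A"
  shows "matrix_inv A $ i $ j = matrix_inv A $ j $ i"
proof -
  define B where "B = matrix_inv A"
  have 1: "A ** B = mat 1" "B ** A = mat 1" using matrix_inv_mult[OF A] unfolding B_def by auto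
  have "A ** transpose B = transpose (B ** transpose A)" by (simp add: matrix_transpose_mul)
  also have "\<dots> = mat 1" using 1 sym by (simp add: transpose_mat)
  finally have 2: "A ** transpose B = mat 1" .
  have "B = B ** (A ** transpose B)" using 2 by simp
  also have "\<dots> = transpose B" using 1 by (simp add: matrix_mul_assoc)
  finally have "B = transpose B" .
  then have "B $ i $ j = transpose B $ i $ j" by simp
  also have "\<dots> = B $ j $ i" by (simp add: transpose_def)
  finally show ?thesis unfolding B_def .
qed

lemma sum_matrix_inv_mult:
  fixes A :: "real^'n::finite^'n"
  assumes A: "invertible A"
  shows "(\<Sum>m\<in>UNIV. matrix_inv A $ a $ m * A $ m $ b) = (if a = b then 1 else 0)"
proof -
  have "(matrix_inv A ** A) $ a $ b = (mat 1 :: real^'n^'n) $ a $ b" using matrix_inv_mult[OF A] by simp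
  then show ?thesis by (simp add: matrix_matrix_mult_def mat_def)
qed

lemma sum_UNIV_option: "(\<Sum>m\<in>(UNIV :: 'a::finite option set). F m) = F None + (\<Sum>m\<in>UNIV. F (Some m))"
  by (simp add: UNIV_option_conv sum.reindex)

section \<open>The connection of a modified Ricci flow, concretely\<close>

locale modified_ricci_flow = slab U T for U :: "(real^'n::finite) set" and T +
  fixes g :: "'n metric" and f :: "'n pt \<Rightarrow> real"
  assumes g_smooth: "\<And>i j. smooth_fun E (g i j)"
    and g_sym: "\<And>i j p. p \<in> E \<Longrightarrow> g i j p = g j i p"
    and g_pos: "\<And>p v. p \<in> E \<Longrightarrow> v \<noteq> 0 \<Longrightarrow> (\<Sum>i\<in>UNIV. \<Sum>j\<in>UNIV. g i j p * v$i * v$j) > 0"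
    and f_smooth: "smooth_fun E f"
    and flow: "\<And>i j p. p \<in> E \<Longrightarrow> pd E (g i j) None p = -2 * Ric E g i j p + 2 * Hess E g f i j p"
begin

sublocale pd: diff_calculus E "smooth_fun E" "pd E"
proof
  show "smooth_fun E F \<Longrightarrow> smooth_fun E G \<Longrightarrow> x \<in> E \<Longrightarrow> pd E (\<lambda>x. F x + G x) a x = pd E F a x + pd E G a x"
    for F G x a by (rule pd_add) (auto intro: smooth_fun_differentiable)
  show "smooth_fun E F \<Longrightarrow> smooth_fun E G \<Longrightarrow> x \<in> E \<Longrightarrow>
      pd E (\<lambda>x. F x * G x) a x = F x * pd E G a x + pd E F a x * G x"
    for F G x a by (rule pd_mult) (auto intro: smooth_fun_differentiable)
  show "(\<And>y. y \<in> E \<Longrightarrow> F y = G y) \<Longrightarrow> x \<in> E \<Longrightarrow> pd E F a x = pd E G a x" for F G x a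
    by (rule pd_cong)
qed (simp_all add: smooth_fun_const smooth_fun_add smooth_fun_mult smooth_fun_pd pd_const pd_comm)

definition metric_matrix :: "'n pt \<Rightarrow> real^'n^'n" where
  "metric_matrix p = (\<chi> a b. g a b p)"

lemma invertible_metric_matrix: "p \<in> E \<Longrightarrow> invertible (metric_matrix p)"
  unfolding metric_matrix_def by (rule pos_def_invertible) (simp add: g_pos)

lemma ginv_eq: "ginv g k l p = matrix_inv (metric_matrix p) $ k $ l"
  unfolding ginv_def metric_matrix_def ..

lemma ginv_sym: "p \<in> E \<Longrightarrow> ginv g k l p = ginv g l k p"
  unfolding ginv_eq
  by (rule matrix_inv_symmetric[OF invertible_metric_matrix]) (simp_all add: metric_matrix_def transpose_def g_sym)

lemma ginv_g: "p \<in> E \<Longrightarrow> (\<Sum>m\<in>UNIV. ginv g a m p * g m b p) = (if a = b then 1 else 0)"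
  using sum_matrix_inv_mult[OF invertible_metric_matrix, of p a b] unfolding ginv_eq
  by (simp add: metric_matrix_def)

lemma ginv_smooth: "smooth_fun E (ginv g k l)"
proof -
  define N where "N p = (\<chi> i j. if j = k then (if i = l then 1 else 0) else metric_matrix p $ i $ j)" for p
  have eq: "ginv g k l p = det (N p) * inverse (det (metric_matrix p))" if "p \<in> E" for p
    unfolding ginv_eq N_def using matrix_inv_cramer[OF invertible_metric_matrix[OF that]]
    by (simp add: divide_inverse)
  have det_N: "smooth_fun E (\<lambda>p. det (N p))"
  proof (rule smooth_fun_det)
    show "smooth_fun E (\<lambda>p. N p $ i $ j)" for i j
      by (cases "j = k"; cases "i = l") (simp_all add: N_def metric_matrix_def smooth_fun_const g_smooth)
  qed
  have det_M: "smooth_fun E (\<lambda>p. det (metric_matrix p))"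
    by (rule smooth_fun_det) (simp add: metric_matrix_def g_smooth)
  have nz: "p \<in> E \<Longrightarrow> det (metric_matrix p) \<noteq> 0" for p
    using invertible_metric_matrix invertible_det_nz by blast
  show ?thesis
    by (rule smooth_fun_cong[OF _ smooth_fun_mult[OF det_N smooth_fun_inverse[OF det_M nz]]]) (simp add: eq)
qed

lemmas smooth_rules = pd.sm_rules ginv_smooth g_smooth f_smooth

lemma Chr_smooth: "smooth_fun E (Chr E g i j k)"
  unfolding Chr_def[abs_def] by (intro smooth_rules)

lemma pd_g_sym: "p \<in> E \<Longrightarrow> pd E (g i j) a p = pd E (g j i) a p"
  by (rule pd_cong) (simp_all add: g_sym)

lemma Chr_sym: "p \<in> E \<Longrightarrow> Chr E g i j k p = Chr E g j i k p"
  unfolding Chr_def by (simp add: pd_g_sym[of p i j] algebra_simps)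

lemma Chr_lower:
  assumes x: "x \<in> E"
  shows "(\<Sum>m\<in>UNIV. Chr E g i b m x * g m c x)
   = (1/2) * (pd E (g b c) (Some i) x + pd E (g i c) (Some b) x - pd E (g i b) (Some c) x)"
proof -
  define P where "P l = pd E (g b l) (Some i) x + pd E (g i l) (Some b) x - pd E (g i b) (Some l) x" for l
  have "(\<Sum>m\<in>UNIV. Chr E g i b m x * g m c x) = (\<Sum>m\<in>UNIV. \<Sum>l\<in>UNIV. (1/2) * P l * (ginv g m l x * g m c x))"
    unfolding Chr_def P_def by (simp add: sum_distrib_left sum_distrib_right algebra_simps)
  also have "\<dots> = (\<Sum>l\<in>UNIV. (1/2) * P l * (\<Sum>m\<in>UNIV. ginv g l m x * g m c x))"
    by (subst sum.swap) (simp add: sum_distrib_left ginv_sym[OF x, of _ "_"])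
  also have "\<dots> = (1/2) * P c" using x by (simp add: ginv_g if_distrib[of "\<lambda>z. _ * z"] cong: if_cong)
  finally show ?thesis unfolding P_def .
qed

lemma metric_compat: "x \<in> E \<Longrightarrow>
    pd E (g b c) (Some i) x = (\<Sum>m\<in>UNIV. Chr E g i b m x * g m c x) + (\<Sum>m\<in>UNIV. Chr E g i c m x * g b m x)"
  using Chr_lower[of x i b c] Chr_lower[of x i c b] pd_g_sym[of x c b] by (simp add: g_sym[of x b])

sublocale spatial: spatial_metric_connection E "smooth_fun E" "\<lambda>F i. pd E F (Some i)" "Chr E g" UNIV "ginv g" g
proof (intro spatial_metric_connection.intro torsion_free_connection.intro pd.diff_calculus_reindex)
  show "torsion_free_connection_axioms E (smooth_fun E) (Chr E g)"
    by unfold_locales (simp_all add: Chr_smooth Chr_sym)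
  show "spatial_metric_connection_axioms E (smooth_fun E) (\<lambda>F i. pd E F (Some i)) (Chr E g) UNIV (ginv g) g"
  proof
    show "x \<in> E \<Longrightarrow> (\<Sum>m\<in>UNIV. ginv g a m x * g m b x) = (if a = b \<and> a \<in> UNIV then 1 else 0)" for x a b
      by (simp add: ginv_g)
  qed (simp_all add: ginv_smooth g_smooth ginv_sym g_sym metric_compat)
qed

lemma spatial_ric: "spatial.ric = Ric E g"
  by (intro ext) (simp add: spatial.ric_def spatial.curv_def Ric_def Riem_def)

lemma spatial_hess: "spatial.hess = Hess E g"
  by (intro ext) (simp add: spatial.hess_def spatial.cov1_def Hess_def)

lemma Ric_sym: "x \<in> E \<Longrightarrow> Ric E g b c x = Ric E g c b x"
  using spatial.ric_sym[of x b c] by (simp add: spatial_ric)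

lemma Hess_sym: "x \<in> E \<Longrightarrow> Hess E g f b c x = Hess E g f c b x"
  using spatial.hess_sym[OF f_smooth, of x b c] by (simp add: spatial_hess)

lemma Ric_smooth: "smooth_fun E (Ric E g i j)"
  using spatial.ric_sm by (simp add: spatial_ric)

lemma Hess_smooth: "smooth_fun E (Hess E g f i j)"
  using spatial.hess_sm[OF f_smooth] by (simp add: spatial_hess)

definition phi :: "'n pt \<Rightarrow> real" where
  "phi = (\<lambda>q. - (1/2) * Scal E g q + pd E f None q - (1/2) * gradSq E g f q)"

lemma phi_smooth: "smooth_fun E phi"
  unfolding phi_def Scal_def[abs_def] gradSq_def[abs_def] by (intro smooth_rules Ric_smooth)

text \<open>Gt is tilde-Gamma for \<tau> = 0; for general \<tau> the connection is its pullback by the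
  time shift (TChr_shift below).\<close>

definition Gt :: "'n option \<Rightarrow> 'n option \<Rightarrow> 'n option \<Rightarrow> 'n pt \<Rightarrow> real" where
  "Gt = TChr E g f 0"

lemma Gt_simps[simp]:
  "Gt a b None = (\<lambda>p. 0)"
  "Gt (Some i) (Some j) (Some k) = Chr E g i j k"
  "Gt (Some i) None (Some k) = (\<lambda>p. - RicUp E g i k p + HessUp E g f i k p)"
  "Gt None (Some i) (Some k) = (\<lambda>p. - RicUp E g i k p + HessUp E g f i k p)"
  "Gt None None (Some k) = gradUp E g phi k"
  unfolding Gt_def TChr_def phi_def by (auto split: option.split)

lemma Gt_smooth: "smooth_fun E (Gt a b c)"
  by (cases a; cases b; cases c)
    (simp_all add: RicUp_def[abs_def] HessUp_def[abs_def] gradUp_def[abs_def] smooth_rules Chr_smooth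
      Ric_smooth Hess_smooth phi_smooth)

lemma Gt_sym: "p \<in> E \<Longrightarrow> Gt a b c p = Gt b a c p"
  by (cases a; cases b; cases c) (simp_all add: Chr_sym)

definition g_ext :: "'n option \<Rightarrow> 'n option \<Rightarrow> 'n pt \<Rightarrow> real" where
  "g_ext a b p = (case (a, b) of (Some i, Some j) \<Rightarrow> g i j p | _ \<Rightarrow> 0)"

definition ginv_ext :: "'n option \<Rightarrow> 'n option \<Rightarrow> 'n pt \<Rightarrow> real" where
  "ginv_ext a b p = (case (a, b) of (Some i, Some j) \<Rightarrow> ginv g i j p | _ \<Rightarrow> 0)"

lemma g_ext_simps[simp]: "g_ext None b = (\<lambda>p. 0)" "g_ext a None = (\<lambda>p. 0)" "g_ext (Some i) (Some j) = g i j"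
  unfolding g_ext_def by (auto split: option.split)

lemma ginv_ext_simps[simp]:
  "ginv_ext None b = (\<lambda>p. 0)" "ginv_ext a None = (\<lambda>p. 0)" "ginv_ext (Some i) (Some j) = ginv g i j"
  unfolding ginv_ext_def by (auto split: option.split)

lemma time_compat:
  assumes x: "x \<in> E"
  shows "pd E (g b c) None x = (\<Sum>m\<in>UNIV. Gt None (Some b) (Some m) x * g m c x)
    + (\<Sum>m\<in>UNIV. Gt None (Some c) (Some m) x * g b m x)"
proof -
  have lower: "(\<Sum>m\<in>UNIV. Gt None (Some b) (Some m) x * g m c x) = Hess E g f b c x - Ric E g b c x" for b c
  proof -
    have "Gt None (Some b) (Some m) x = (\<Sum>l\<in>UNIV. ginv g m l x * (Hess E g f b l x - Ric E g b l x))" for m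
      by (simp add: RicUp_def HessUp_def right_diff_distrib sum_subtractf)
    then show ?thesis
      using spatial.lower_raised[OF x, of c "\<lambda>l. Hess E g f b l x - Ric E g b l x"] by (simp add: mult.commute)
  qed
  show ?thesis
    using lower[of b c] lower[of c b] flow[OF x, of b c] Ric_sym[OF x, of b c] Hess_sym[OF x, of b c]
    by (simp add: g_sym[OF x, of b])
qed

sublocale spacetime: spatial_metric_connection E "smooth_fun E" "pd E" Gt "range Some" ginv_ext g_ext
proof (intro spatial_metric_connection.intro torsion_free_connection.intro pd.diff_calculus_axioms)
  show "torsion_free_connection_axioms E (smooth_fun E) Gt"
    by unfold_locales (simp_all add: Gt_smooth Gt_sym)
  show "spatial_metric_connection_axioms E (smooth_fun E) (pd E) Gt (range Some) ginv_ext g_ext"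
  proof
    show "smooth_fun E (ginv_ext a b)" "smooth_fun E (g_ext a b)" for a b
      by (cases a; cases b; simp add: ginv_smooth g_smooth smooth_fun_const)+
    show "x \<in> E \<Longrightarrow> ginv_ext a b x = ginv_ext b a x" "x \<in> E \<Longrightarrow> g_ext a b x = g_ext b a x" for x a b
      by (cases a; cases b; simp add: ginv_sym g_sym)+
    show "a \<notin> range Some \<or> b \<notin> range Some \<Longrightarrow> ginv_ext a b x = 0"
      "a \<notin> range Some \<or> b \<notin> range Some \<Longrightarrow> g_ext a b x = 0" for a b x
      by (cases a; cases b; auto)+
    show "c \<notin> range Some \<Longrightarrow> Gt a b c x = 0" for a b c x
      by (cases c) auto
    show "x \<in> E \<Longrightarrow> (\<Sum>m\<in>UNIV. ginv_ext a m x * g_ext m b x) = (if a = b \<and> a \<in> range Some then 1 else 0)"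
      for x a b by (cases a; cases b) (simp_all add: sum_UNIV_option ginv_g)
    show "b \<in> range Some \<Longrightarrow> c \<in> range Some \<Longrightarrow> x \<in> E \<Longrightarrow> pd E (g_ext b c) a x =
        (\<Sum>m\<in>UNIV. Gt a b m x * g_ext m c x) + (\<Sum>m\<in>UNIV. Gt a c m x * g_ext b m x)" for a b c x
      by (cases a) (auto simp: sum_UNIV_option metric_compat time_compat)
  qed
qed

lemma spacetime_ric: "x \<in> E \<Longrightarrow> spacetime.ric (Some b) (Some c) x = Ric E g b c x"
  unfolding spacetime.ric_def spacetime.curv_def Ric_def Riem_def
  by (simp add: sum_UNIV_option pd.d_zero)

lemma spacetime_hess: "spacetime.hess f (Some a) (Some b) = Hess E g f a b"
  by (intro ext) (simp add: spacetime.hess_def spacetime.cov1_def Hess_def sum_UNIV_option)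

lemma spacetime_scal: "x \<in> E \<Longrightarrow> spacetime.scal x = Scal E g x"
  unfolding spacetime.scal_def Scal_def by (simp add: sum_UNIV_option spacetime_ric)

sublocale flow: ricci_flow_connection E "smooth_fun E" "pd E" Gt "range Some" ginv_ext g_ext f phi None
proof (intro ricci_flow_connection.intro spacetime.spatial_metric_connection_axioms)
  show "ricci_flow_connection_axioms E (smooth_fun E) (pd E) Gt (range Some) ginv_ext f phi None"
  proof
    show "range Some = - {None}"
      by (auto intro: option.exhaust)
    show "Gt k None p x = (\<Sum>l\<in>UNIV. ginv_ext p l x * (spacetime.hess f k l x - spacetime.ric k l x))"
      if "k \<noteq> None" "x \<in> E" for k p x
      using that by (cases k; cases p)
        (simp_all add: sum_UNIV_option RicUp_def HessUp_def spacetime_hess spacetime_ric sum_subtractf algebra_simps)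
    show "Gt None None p x = (\<Sum>l\<in>UNIV. ginv_ext p l x * pd E phi l x)" if "x \<in> E" for p x
      by (cases p) (simp_all add: sum_UNIV_option gradUp_def)
    show "phi x = - (1/2) * spacetime.scal x + pd E f None x
        - (1/2) * (\<Sum>b\<in>UNIV. \<Sum>c\<in>UNIV. ginv_ext b c x * (pd E f b x * pd E f c x))" if "x \<in> E" for x
      using that unfolding phi_def gradSq_def by (simp add: spacetime_scal sum_UNIV_option algebra_simps)
  qed (simp_all add: f_smooth phi_smooth)
qed

context
  fixes \<tau> :: real
  assumes tau: "0 \<le> \<tau>"
begin

abbreviation "E' \<equiv> U \<times> {0..<T - \<tau>}"

lemma shift_subset: "shift \<tau> ` E' \<subseteq> E"
  using tau by (auto simp: shift_def)

lemma pd_shift: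
  assumes F: "smooth_fun E F" and q: "q \<in> E'"
  shows "pd E' (\<lambda>q. F (shift \<tau> q)) a q = pd E F a (shift \<tau> q)"
proof -
  interpret shifted: slab U "T - \<tau>" by unfold_locales (rule U_open)
  have "shift \<tau> q \<in> E" using shift_subset q by auto
  then have "(F has_derivative frechet_derivative F (at (shift \<tau> q) within E)) (at (shift \<tau> q) within E)"
    by (intro differentiable_has_frechet_derivative smooth_fun_differentiable[OF F])
  from shifted.pd_eq_derivative[OF q has_derivative_shift[OF this shift_subset]] show ?thesis
    unfolding pd_def by simp
qed

lemma TChr_shift: "TChr E g f \<tau> a b c = (\<lambda>q. Gt a b c (shift \<tau> q))"
  by (rule ext) (cases a; cases b; cases c; simp add: Gt_def TChr_def)

lemma TRiem_shift: "q \<in> E' \<Longrightarrow> TRiem E E' g f \<tau> a b c e q = spacetime.curv a b c e (shift \<tau> q)"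
  unfolding TRiem_def spacetime.curv_def TChr_shift by (simp add: pd_shift Gt_smooth)

lemma S_shift:
  assumes q: "q \<in> E'"
  shows "TRic E E' g f \<tau> b c q - THess E E' g f \<tau> (\<lambda>q. f (shift \<tau> q)) b c q = flow.S b c (shift \<tau> q)"
proof -
  have pd_f: "pd E' (\<lambda>q. f (shift \<tau> q)) m q' = pd E f m (shift \<tau> q')" if "q' \<in> E'" for q' m
    by (rule pd_shift[OF f_smooth that])
  have "pd E' (pd E' (\<lambda>q. f (shift \<tau> q)) c) b q = pd E' (\<lambda>q. pd E f c (shift \<tau> q)) b q"
    by (rule pd_cong[OF pd_f q])
  also have "\<dots> = pd E (pd E f c) b (shift \<tau> q)"
    by (rule pd_shift[OF smooth_fun_pd[OF f_smooth] q])
  finally have "THess E E' g f \<tau> (\<lambda>q. f (shift \<tau> q)) b c q = spacetime.hess f b c (shift \<tau> q)"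
    unfolding THess_def spacetime.hess_def spacetime.cov1_def TChr_shift using q by (simp add: pd_f)
  then show ?thesis
    using q by (simp add: flow.S_def TRic_def spacetime.ric_def TRiem_shift)
qed

lemma TCov2_shift:
  assumes q: "q \<in> E'"
  shows "TCov2 E E' g f \<tau>
     (\<lambda>b c q. TRic E E' g f \<tau> b c q - THess E E' g f \<tau> (\<lambda>q. f (shift \<tau> q)) b c q) a b c q
     = spacetime.cov2 flow.S a b c (shift \<tau> q)"
proof -
  have "pd E' (\<lambda>q. TRic E E' g f \<tau> b c q - THess E E' g f \<tau> (\<lambda>q. f (shift \<tau> q)) b c q) a q
     = pd E' (\<lambda>q. flow.S b c (shift \<tau> q)) a q"
    by (rule pd_cong[OF S_shift q])
  also have "\<dots> = pd E (flow.S b c) a (shift \<tau> q)"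
    by (rule pd_shift[OF flow.S_sm q])
  finally show ?thesis
    unfolding TCov2_def spacetime.cov2_def TChr_shift using q by (simp add: S_shift)
qed

lemma lowered_TRiem_shift: "q \<in> E' \<Longrightarrow>
    (\<Sum>r\<in>UNIV. g r i (shift \<tau> q) * TRiem E E' g f \<tau> a b c (Some r) q)
  = (\<Sum>r\<in>UNIV. g_ext r (Some i) (shift \<tau> q) * spacetime.curv a b c r (shift \<tau> q))"
  by (simp add: sum_UNIV_option TRiem_shift)

end

end

theorem corollary3p5:
  fixes U :: "(real^'n::finite) set" and T \<tau> :: real
    and g :: "'n metric" and f :: "'n pt \<Rightarrow> real"
  defines "D \<equiv> U \<times> {0..<T}"
    and "D' \<equiv> U \<times> {0..<T - \<tau>}"
    and "ft \<equiv> (\<lambda>q. f (shift \<tau> q))"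
  assumes U: "open U"
    and tau: "0 \<le> \<tau>" "\<tau> < T"
    and g_smooth: "\<And>i j. smooth_fun D (g i j)"
    and g_sym: "\<And>i j p. p \<in> D \<Longrightarrow> g i j p = g j i p"
    and g_pos: "\<And>p v. p \<in> D \<Longrightarrow> v \<noteq> 0 \<Longrightarrow> (\<Sum>i\<in>UNIV. \<Sum>j\<in>UNIV. g i j p * v$i * v$j) > 0"
    and f_smooth: "smooth_fun D f"
    and flow: "\<And>i j p. p \<in> D \<Longrightarrow>
        pd D (g i j) None p = -2 * Ric D g i j p + 2 * Hess D g f i j p"
    and p: "p \<in> D'"
  shows
   "(let S = (\<lambda>b c q. TRic D D' g f \<tau> b c q - THess D D' g f \<tau> ft b c q);
         Cv = TCov2 D D' g f \<tau> S
     in (\<forall>i j k.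
           Cv (Some j) (Some k) (Some i) p =
             Cv (Some k) (Some j) (Some i) p
             + (\<Sum>q\<in>UNIV. g q i (shift \<tau> p) * TRiem D D' g f \<tau> (Some k) (Some j) None (Some q) p))
      \<and> (\<forall>i k.
           Cv None (Some k) (Some i) p =
             Cv (Some k) None (Some i) p
             + (\<Sum>q\<in>UNIV. g q k (shift \<tau> p) * TRiem D D' g f \<tau> (Some i) None None (Some q) p))
      \<and> (\<forall>j k. Cv (Some j) None (Some k) p = Cv (Some k) None (Some j) p)
      \<and> (\<forall>k. Cv None None (Some k) p = Cv (Some k) None None p))"
proof -
  interpret modified_ricci_flow U T g f
    using U g_smooth g_sym g_pos f_smooth flow unfolding D_def by unfold_locales
  have p': "p \<in> U \<times> {0..<T - \<tau>}" using p unfolding D'_def .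
  have x: "shift \<tau> p \<in> U \<times> {0..<T}" using shift_subset[OF tau(1)] p' by auto
  show ?thesis
    unfolding Let_def D_def D'_def ft_def TCov2_shift[OF tau(1) p'] lowered_TRiem_shift[OF tau(1) p']
    by (intro conjI allI; rule flow.S_cov_identities[OF x]) simp_all
qed

end
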